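(* Let $(\mathcal C,\otimes,I,a,l,r)$ be a monoidal category, $(F,\Delta,\varepsilon,F_2,F_0)$ and $(G,\delta,\epsilon,G_2,G_0)$ bicomonads on $\mathcal C$, and $\varphi:FG\to GF$ a comonad distributive law. The following are equivalent: (1) $(\mathcal C^{(F,G)}(\varphi),\otimes,I,a,l,r)$ is a monoidal category, where for bicomodules $X,Y$ the coactions on $X\otimes Y$ are $F_2(X,Y)\circ(\theta^X\otimes\theta^Y)$ and $G_2(X,Y)\circ(\rho^X\otimes\rho^Y)$ and $I$ has coactions $F_0,G_0$; (2) $\varphi$ is a monoidal comonad distributive law; (3) the smash coproduct $FG$ (comultiplication $F\varphi_{GX}\circ FF\delta_X\circ\Delta_{GX}$, counit $\epsilon_X\circ\varepsilon_{GX}$, monoidal structure $(FG)_2(M,N)=F(G_2(M,N))\circ F_2(GM,GN)$, $(FG)_0=F(G_0)\circ F_0$) is a bicomonad; (4) in the 2-category $\mathbf{Cmd}(\mathbf{Cat})$, $F_2$ is a 2-cell from the 1-cell $(\otimes\circ(F\times F),w)$ to the 1-cell $(F\circ\otimes,w')$, both from $(\mathcal C\times\mathcal C,G\times G,\delta\times\delta,\epsilon\times\epsilon)$ to $(\mathcal C,G,\delta,\epsilon)$, where $w_{(X,Y)}=G_2(FX,FY)\circ(\varphi_X\otimes\varphi_Y)$ and $w'_{(X,Y)}=\varphi_{X\otimes Y}\circ F(G_2(X,Y))$; and $F_0$ is a 2-cell from the 1-cell $(I,G_0)$ to the 1-cell $(FI,\varphi_I\circ F(G_0))$, both from $(\mathfrak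 I,\mathrm{id},\mathrm{id},\mathrm{id})$ to $(\mathcal C,G,\delta,\epsilon)$, where $\mathfrak I$ is the terminal category; (5) $(\otimes,F_2,G_2):(\mathcal C\times\mathcal C,F\times F,G\times G,\varphi\times\varphi)\to(\mathcal C,F,G,\varphi)$ and $(I,F_0,G_0):(\mathfrak I,\mathrm{id},\mathrm{id},\mathrm{id})\to(\mathcal C,F,G,\varphi)$ are 1-cells in $\mathbf{CC}(\mathbf{Cat})$.
   Context: Comonads, comonad distributive laws $\varphi:FG\to GF$ (conditions $G\varphi\circ\varphi G\circ F\delta=\delta F\circ\varphi$, $\varphi F\circ F\varphi\circ\Delta G=G\Delta\circ\varphi$, $G\varepsilon\circ\varphi=\varepsilon G$, $\epsilon F\circ\varphi=F\epsilon$), $\varphi$-bicomodules $(M,\theta^M,\rho^M)$ ($F$-comodule and $G$-comodule with $\varphi_M\circ F\rho^M\circ\theta^M=G\theta^M\circ\rho^M$) forming the category $\mathcal C^{(F,G)}(\varphi)$, and bicomonads (comonads that are monoidal functors $(G,G_2,G_0)$ with $G(G_2(X,Y))\circ G_2(GX,GY)\circ(\delta_X\otimes\delta_Y)=\delta_{X\otimes Y}\circ G_2(X,Y)$, $\epsilon_{X\otimes Y}\circ G_2=\epsilon_X\otimes\epsilon_Y$, $G(G_0)\circ G_0=\delta_I\circ G_0$, $\epsilon_I\circ G_0=\mathrm{id}_I$) are as usual. $\varphi$ is a monoidal comonad distributive law if $\varphi_{M\otimes N}\circ F(G_2(M,N))\circ F_2(GM,GN)=G(F_2(M,N))\circ G_2(FM,FN)\circ(\varphi_M\otimes\varphi_N)$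 and $\varphi_I\circ F(G_0)\circ F_0=G(F_0)\circ G_0$. The 2-category $\mathbf{Cmd}(\mathbb C)$ (for a 2-category $\mathbb C$, here $\mathbf{Cat}$): 0-cells are comonads $(Y,T,\delta,\epsilon)$ on objects $Y$; a 1-cell $(Y,T,\delta,\epsilon)\to(Y',T',\delta',\epsilon')$ is a pair $(W,w)$ with $W:Y\to Y'$ and $w:WT\Rightarrow T'W$ satisfying $\delta'W\circ w=T'w\circ wT\circ W\delta$ and $\epsilon'W\circ w=W\epsilon$; a 2-cell $(W,w)\Rightarrow(V,v)$ is $\chi:W\Rightarrow V$ with $v\circ\chi T=T'\chi\circ w$. The 2-category $\mathbf{CC}(\mathbb C)$: 0-cells $(C,D,T,\varphi)$ with $D=(D,\Delta,\varepsilon)$, $T=(T,\delta,\epsilon)$ comonads on $C$ and $\varphi:DT\Rightarrow TD$ a comonad distributive law; a 1-cell $(C,D,T,\varphi)\to(C',D',T',\varphi')$ is $(J,j_d,j_t)$ with $J:C\to C'$, $j_d:JD\Rightarrow D'J$, $j_t:JT\Rightarrow T'J$ satisfying $\Delta'J\circ j_d=D'j_d\circ j_dD\circ J\Delta$, $J\varepsilon=\varepsilon'J\circ j_d$, $\delta'J\circ j_t=T'j_t\circ j_tT\circ J\delta$, $J\epsilon=\epsilon'J\circ j_t$, and $T'j_d\circ j_tD\circ J\varphi=\varphi'J\circ D'j_t\circ j_dT$ as maps $JDT\Rightarrow T'D'J$. *)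

theory Defs
  imports Main
begin

record ('o,'a) cat =
  Ob  :: "'o set"
  Ar  :: "'a set"
  src :: "'a \<Rightarrow> 'o"
  tgt :: "'a \<Rightarrow> 'o"
  cmp :: "'a \<Rightarrow> 'a \<Rightarrow> 'a"   (* cmp C g f = g \<circ> f *)
  idn :: "'o \<Rightarrow> 'a"

definition hom :: "('o,'a,'z) cat_scheme \<Rightarrow> 'o \<Rightarrow> 'o \<Rightarrow> 'a set" where
  "hom C X Y = {f \<in> Ar C. src C f = X \<and> tgt C f = Y}"

definition is_category :: "('o,'a,'z) cat_scheme \<Rightarrow> bool" where
  "is_category C \<longleftrightarrow>
     (\<forall>f\<in>Ar C. src C f \<in> Ob C \<and> tgt C f \<in> Ob C) \<and>
     (\<forall>X\<in>Ob C. idn C X \<in> hom C X X) \<and>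
     (\<forall>f\<in>Ar C. \<forall>g\<in>Ar C. tgt C f = src C g \<longrightarrow> cmp C g f \<in> hom C (src C f) (tgt C g)) \<and>
     (\<forall>f\<in>Ar C. cmp C (idn C (tgt C f)) f = f \<and> cmp C f (idn C (src C f)) = f) \<and>
     (\<forall>f\<in>Ar C. \<forall>g\<in>Ar C. \<forall>h\<in>Ar C. tgt C f = src C g \<and> tgt C g = src C h \<longrightarrow>
        cmp C h (cmp C g f) = cmp C (cmp C h g) f)"

definition is_iso :: "('o,'a,'z) cat_scheme \<Rightarrow> 'a \<Rightarrow> bool" where
  "is_iso C f \<longleftrightarrow> f \<in> Ar C \<and>
     (\<exists>g\<in>hom C (tgt C f) (src C f). cmp C g f = idn C (src C f) \<and> cmp C f g = idn C (tgt C f))"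

record ('o,'a,'p,'b) ftr =
  fo :: "'o \<Rightarrow> 'p"
  fa :: "'a \<Rightarrow> 'b"

definition is_functor :: "('o,'a,'z) cat_scheme \<Rightarrow> ('p,'b,'y) cat_scheme \<Rightarrow> ('o,'a,'p,'b) ftr \<Rightarrow> bool" where
  "is_functor C D F \<longleftrightarrow>
     (\<forall>X\<in>Ob C. fo F X \<in> Ob D) \<and>
     (\<forall>f\<in>Ar C. fa F f \<in> hom D (fo F (src C f)) (fo F (tgt C f))) \<and>
     (\<forall>X\<in>Ob C. fa F (idn C X) = idn D (fo F X)) \<and>
     (\<forall>f\<in>Ar C. \<forall>g\<in>Ar C. tgt C f = src C g \<longrightarrow> fa F (cmp C g f) = cmp D (fa F g) (fa F f))"

definition nat_trans :: "('o,'a,'z) cat_scheme \<Rightarrow> ('p,'b,'y) cat_scheme \<Rightarrow>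
    ('o,'a,'p,'b) ftr \<Rightarrow> ('o,'a,'p,'b) ftr \<Rightarrow> ('o \<Rightarrow> 'b) \<Rightarrow> bool" where
  "nat_trans C D F G \<eta> \<longleftrightarrow>
     (\<forall>X\<in>Ob C. \<eta> X \<in> hom D (fo F X) (fo G X)) \<and>
     (\<forall>f\<in>Ar C. cmp D (\<eta> (tgt C f)) (fa F f) = cmp D (fa G f) (\<eta> (src C f)))"

definition fcomp :: "('p,'b,'q,'c) ftr \<Rightarrow> ('o,'a,'p,'b) ftr \<Rightarrow> ('o,'a,'q,'c) ftr" where
  "fcomp G F = \<lparr>fo = fo G \<circ> fo F, fa = fa G \<circ> fa F\<rparr>"

definition id_ftr :: "('o,'a,'o,'a) ftr" where
  "id_ftr = \<lparr>fo = id, fa = id\<rparr>"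

definition comonad :: "('o,'a,'z) cat_scheme \<Rightarrow> ('o,'a,'o,'a) ftr \<Rightarrow> ('o \<Rightarrow> 'a) \<Rightarrow> ('o \<Rightarrow> 'a) \<Rightarrow> bool" where
  "comonad C T \<delta> e \<longleftrightarrow>
     is_functor C C T \<and> nat_trans C C T (fcomp T T) \<delta> \<and> nat_trans C C T id_ftr e \<and>
     (\<forall>X\<in>Ob C. cmp C (\<delta> (fo T X)) (\<delta> X) = cmp C (fa T (\<delta> X)) (\<delta> X) \<and>
                cmp C (e (fo T X)) (\<delta> X) = idn C (fo T X) \<and>
                cmp C (fa T (e X)) (\<delta> X) = idn C (fo T X))"

definition dist_law :: "('o,'a,'z) cat_scheme \<Rightarrow>
    ('o,'a,'o,'a) ftr \<Rightarrow> ('o \<Rightarrow> 'a) \<Rightarrow> ('o \<Rightarrow> 'a) \<Rightarrow>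
    ('o,'a,'o,'a) ftr \<Rightarrow> ('o \<Rightarrow> 'a) \<Rightarrow> ('o \<Rightarrow> 'a) \<Rightarrow> ('o \<Rightarrow> 'a) \<Rightarrow> bool" where
  "dist_law C F DF eF G dG eG \<phi> \<longleftrightarrow>
     nat_trans C C (fcomp F G) (fcomp G F) \<phi> \<and>
     (\<forall>X\<in>Ob C.
        cmp C (fa G (\<phi> X)) (cmp C (\<phi> (fo G X)) (fa F (dG X))) = cmp C (dG (fo F X)) (\<phi> X) \<and>
        cmp C (\<phi> (fo F X)) (cmp C (fa F (\<phi> X)) (DF (fo G X))) = cmp C (fa G (DF X)) (\<phi> X) \<and>
        cmp C (fa G (eF X)) (\<phi> X) = eF (fo G X) \<and>
        cmp C (eG (fo F X)) (\<phi> X) = fa F (eG X))"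

record ('o,'a) moncat = "('o,'a) cat" +
  tns   :: "'o \<Rightarrow> 'o \<Rightarrow> 'o"
  tnsa  :: "'a \<Rightarrow> 'a \<Rightarrow> 'a"
  munit :: "'o"
  asc   :: "'o \<Rightarrow> 'o \<Rightarrow> 'o \<Rightarrow> 'a"
  lu    :: "'o \<Rightarrow> 'a"
  ru    :: "'o \<Rightarrow> 'a"

definition monoidal_category :: "('o,'a,'z) moncat_scheme \<Rightarrow> bool" where
  "monoidal_category M \<longleftrightarrow>
     is_category M \<and>
     munit M \<in> Ob M \<and>
     (\<forall>X\<in>Ob M. \<forall>Y\<in>Ob M. tns M X Y \<in> Ob M) \<and>
     (\<forall>f\<in>Ar M. \<forall>g\<in>Ar M. tnsa M f g \<in> hom M (tns M (src M f) (src M g)) (tns M (tgt M f) (tgt M g))) \<and>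
     (\<forall>X\<in>Ob M. \<forall>Y\<in>Ob M. tnsa M (idn M X) (idn M Y) = idn M (tns M X Y)) \<and>
     (\<forall>f\<in>Ar M. \<forall>g\<in>Ar M. \<forall>f'\<in>Ar M. \<forall>g'\<in>Ar M. tgt M f = src M g \<and> tgt M f' = src M g' \<longrightarrow>
        tnsa M (cmp M g f) (cmp M g' f') = cmp M (tnsa M g g') (tnsa M f f')) \<and>
     (\<forall>X\<in>Ob M. \<forall>Y\<in>Ob M. \<forall>Z\<in>Ob M.
        asc M X Y Z \<in> hom M (tns M (tns M X Y) Z) (tns M X (tns M Y Z)) \<and> is_iso M (asc M X Y Z)) \<and>
     (\<forall>X\<in>Ob M. lu M X \<in> hom M (tns M (munit M) X) X \<and> is_iso M (lu M X) \<and>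
                ru M X \<in> hom M (tns M X (munit M)) X \<and> is_iso M (ru M X)) \<and>
     (\<forall>f\<in>Ar M. \<forall>g\<in>Ar M. \<forall>h\<in>Ar M.
        cmp M (asc M (tgt M f) (tgt M g) (tgt M h)) (tnsa M (tnsa M f g) h) =
        cmp M (tnsa M f (tnsa M g h)) (asc M (src M f) (src M g) (src M h))) \<and>
     (\<forall>f\<in>Ar M. cmp M (lu M (tgt M f)) (tnsa M (idn M (munit M)) f) = cmp M f (lu M (src M f)) \<and>
                cmp M (ru M (tgt M f)) (tnsa M f (idn M (munit M))) = cmp M f (ru M (src M f))) \<and>
     (\<forall>W\<in>Ob M. \<forall>X\<in>Ob M. \<forall>Y\<in>Ob M. \<forall>Z\<in>Ob M.
        cmp M (tnsa M (idn M W) (asc M X Y Z))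
          (cmp M (asc M W (tns M X Y) Z) (tnsa M (asc M W X Y) (idn M Z))) =
        cmp M (asc M W X (tns M Y Z)) (asc M (tns M W X) Y Z)) \<and>
     (\<forall>X\<in>Ob M. \<forall>Y\<in>Ob M.
        cmp M (tnsa M (idn M X) (lu M Y)) (asc M X (munit M) Y) = tnsa M (ru M X) (idn M Y))"

definition monoidal_functor :: "('o,'a,'z) moncat_scheme \<Rightarrow> ('o,'a,'o,'a) ftr \<Rightarrow>
    ('o \<Rightarrow> 'o \<Rightarrow> 'a) \<Rightarrow> 'a \<Rightarrow> bool" where
  "monoidal_functor M F F2 F0 \<longleftrightarrow>
     is_functor M M F \<and>
     (\<forall>X\<in>Ob M. \<forall>Y\<in>Ob M. F2 X Y \<in> hom M (tns M (fo F X) (fo F Y)) (fo F (tns M X Y))) \<and>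
     (\<forall>f\<in>Ar M. \<forall>g\<in>Ar M.
        cmp M (F2 (tgt M f) (tgt M g)) (tnsa M (fa F f) (fa F g)) =
        cmp M (fa F (tnsa M f g)) (F2 (src M f) (src M g))) \<and>
     F0 \<in> hom M (munit M) (fo F (munit M)) \<and>
     (\<forall>X\<in>Ob M. \<forall>Y\<in>Ob M. \<forall>Z\<in>Ob M.
        cmp M (fa F (asc M X Y Z)) (cmp M (F2 (tns M X Y) Z) (tnsa M (F2 X Y) (idn M (fo F Z)))) =
        cmp M (F2 X (tns M Y Z)) (cmp M (tnsa M (idn M (fo F X)) (F2 Y Z)) (asc M (fo F X) (fo F Y) (fo F Z)))) \<and>
     (\<forall>X\<in>Ob M.
        cmp M (fa F (lu M X)) (cmp M (F2 (munit M) X) (tnsa M F0 (idn M (fo F X)))) = lu M (fo F X) \<and>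
        cmp M (fa F (ru M X)) (cmp M (F2 X (munit M)) (tnsa M (idn M (fo F X)) F0)) = ru M (fo F X))"

definition bicomonad :: "('o,'a,'z) moncat_scheme \<Rightarrow> ('o,'a,'o,'a) ftr \<Rightarrow> ('o \<Rightarrow> 'a) \<Rightarrow> ('o \<Rightarrow> 'a) \<Rightarrow>
    ('o \<Rightarrow> 'o \<Rightarrow> 'a) \<Rightarrow> 'a \<Rightarrow> bool" where
  "bicomonad M G d e G2 G0 \<longleftrightarrow>
     comonad M G d e \<and> monoidal_functor M G G2 G0 \<and>
     (\<forall>X\<in>Ob M. \<forall>Y\<in>Ob M.
        cmp M (fa G (G2 X Y)) (cmp M (G2 (fo G X) (fo G Y)) (tnsa M (d X) (d Y))) =
          cmp M (d (tns M X Y)) (G2 X Y) \<and>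
        cmp M (e (tns M X Y)) (G2 X Y) = tnsa M (e X) (e Y)) \<and>
     cmp M (fa G G0) G0 = cmp M (d (munit M)) G0 \<and>
     cmp M (e (munit M)) G0 = idn M (munit M)"

definition monoidal_dist_law :: "('o,'a,'z) moncat_scheme \<Rightarrow>
    ('o,'a,'o,'a) ftr \<Rightarrow> ('o \<Rightarrow> 'o \<Rightarrow> 'a) \<Rightarrow> 'a \<Rightarrow>
    ('o,'a,'o,'a) ftr \<Rightarrow> ('o \<Rightarrow> 'o \<Rightarrow> 'a) \<Rightarrow> 'a \<Rightarrow> ('o \<Rightarrow> 'a) \<Rightarrow> bool" where
  "monoidal_dist_law M F F2 F0 G G2 G0 \<phi> \<longleftrightarrow>
     (\<forall>X\<in>Ob M. \<forall>Y\<in>Ob M.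
        cmp M (\<phi> (tns M X Y)) (cmp M (fa F (G2 X Y)) (F2 (fo G X) (fo G Y))) =
        cmp M (fa G (F2 X Y)) (cmp M (G2 (fo F X) (fo F Y)) (tnsa M (\<phi> X) (\<phi> Y)))) \<and>
     cmp M (\<phi> (munit M)) (cmp M (fa F G0) F0) = cmp M (fa G F0) G0"

section \<open>phi-bicomodules and the monoidal category C^(F,G)(phi)\<close>

definition is_bicomod :: "('o,'a,'z) cat_scheme \<Rightarrow>
    ('o,'a,'o,'a) ftr \<Rightarrow> ('o \<Rightarrow> 'a) \<Rightarrow> ('o \<Rightarrow> 'a) \<Rightarrow>
    ('o,'a,'o,'a) ftr \<Rightarrow> ('o \<Rightarrow> 'a) \<Rightarrow> ('o \<Rightarrow> 'a) \<Rightarrow> ('o \<Rightarrow> 'a) \<Rightarrow> 'o \<times> 'a \<times> 'a \<Rightarrow> bool" where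
  "is_bicomod C F DF eF G dG eG \<phi> A \<longleftrightarrow>
     (case A of (X, \<theta>, \<rho>) \<Rightarrow>
        X \<in> Ob C \<and> \<theta> \<in> hom C X (fo F X) \<and> \<rho> \<in> hom C X (fo G X) \<and>
        cmp C (DF X) \<theta> = cmp C (fa F \<theta>) \<theta> \<and> cmp C (eF X) \<theta> = idn C X \<and>
        cmp C (dG X) \<rho> = cmp C (fa G \<rho>) \<rho> \<and> cmp C (eG X) \<rho> = idn C X \<and>
        cmp C (\<phi> X) (cmp C (fa F \<rho>) \<theta>) = cmp C (fa G \<theta>) \<rho>)"

definition is_bicomod_mor :: "('o,'a,'z) cat_scheme \<Rightarrow> ('o,'a,'o,'a) ftr \<Rightarrow> ('o,'a,'o,'a) ftr \<Rightarrow>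
    'o \<times> 'a \<times> 'a \<Rightarrow> 'a \<Rightarrow> 'o \<times> 'a \<times> 'a \<Rightarrow> bool" where
  "is_bicomod_mor C F G A f B \<longleftrightarrow>
     (case A of (X, \<theta>, \<rho>) \<Rightarrow> case B of (Y, \<theta>', \<rho>') \<Rightarrow>
        f \<in> hom C X Y \<and> cmp C \<theta>' f = cmp C (fa F f) \<theta> \<and> cmp C \<rho>' f = cmp C (fa G f) \<rho>)"

definition bc_tns :: "('o,'a,'z) moncat_scheme \<Rightarrow> ('o \<Rightarrow> 'o \<Rightarrow> 'a) \<Rightarrow> ('o \<Rightarrow> 'o \<Rightarrow> 'a) \<Rightarrow>
    'o \<times> 'a \<times> 'a \<Rightarrow> 'o \<times> 'a \<times> 'a \<Rightarrow> 'o \<times> 'a \<times> 'a" where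
  "bc_tns M F2 G2 A B =
     (case A of (X, \<theta>, \<rho>) \<Rightarrow> case B of (Y, \<theta>', \<rho>') \<Rightarrow>
        (tns M X Y, cmp M (F2 X Y) (tnsa M \<theta> \<theta>'), cmp M (G2 X Y) (tnsa M \<rho> \<rho>')))"

definition bicomod_moncat :: "('o,'a,'z) moncat_scheme \<Rightarrow>
    ('o,'a,'o,'a) ftr \<Rightarrow> ('o \<Rightarrow> 'a) \<Rightarrow> ('o \<Rightarrow> 'a) \<Rightarrow> ('o \<Rightarrow> 'o \<Rightarrow> 'a) \<Rightarrow> 'a \<Rightarrow>
    ('o,'a,'o,'a) ftr \<Rightarrow> ('o \<Rightarrow> 'a) \<Rightarrow> ('o \<Rightarrow> 'a) \<Rightarrow> ('o \<Rightarrow> 'o \<Rightarrow> 'a) \<Rightarrow> 'a \<Rightarrow> ('o \<Rightarrow> 'a) \<Rightarrow>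
    ('o \<times> 'a \<times> 'a, ('o \<times> 'a \<times> 'a) \<times> 'a \<times> ('o \<times> 'a \<times> 'a)) moncat" where
  "bicomod_moncat M F DF eF F2 F0 G dG eG G2 G0 \<phi> =
     (let U = (munit M, F0, G0);
          T = bc_tns M F2 G2
      in \<lparr> Ob = {A. is_bicomod M F DF eF G dG eG \<phi> A},
           Ar = {(A, f, B). is_bicomod M F DF eF G dG eG \<phi> A \<and> is_bicomod M F DF eF G dG eG \<phi> B \<and>
                            is_bicomod_mor M F G A f B},
           src = fst,
           tgt = (\<lambda>t. snd (snd t)),
           cmp = (\<lambda>g f. (fst f, cmp M (fst (snd g)) (fst (snd f)), snd (snd g))),
           idn = (\<lambda>A. (A, idn M (fst A), A)),
           tns = T,
           tnsa = (\<lambda>f g. (T (fst f) (fst g), tnsa M (fst (snd f)) (fst (snd g)),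
                           T (snd (snd f)) (snd (snd g)))),
           munit = U,
           asc = (\<lambda>A B C. (T (T A B) C, asc M (fst A) (fst B) (fst C), T A (T B C))),
           lu = (\<lambda>A. (T U A, lu M (fst A), A)),
           ru = (\<lambda>A. (T A U, ru M (fst A), A)) \<rparr>)"

section \<open>Smash coproduct FG\<close>

definition smash_comult :: "('o,'a,'z) cat_scheme \<Rightarrow> ('o,'a,'o,'a) ftr \<Rightarrow> ('o \<Rightarrow> 'a) \<Rightarrow>
    ('o,'a,'o,'a) ftr \<Rightarrow> ('o \<Rightarrow> 'a) \<Rightarrow> ('o \<Rightarrow> 'a) \<Rightarrow> 'o \<Rightarrow> 'a" where
  "smash_comult C F DF G dG \<phi> X =
     cmp C (fa F (\<phi> (fo G X))) (cmp C (fa F (fa F (dG X))) (DF (fo G X)))"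

definition smash_counit :: "('o,'a,'z) cat_scheme \<Rightarrow> ('o \<Rightarrow> 'a) \<Rightarrow> ('o,'a,'o,'a) ftr \<Rightarrow> ('o \<Rightarrow> 'a) \<Rightarrow> 'o \<Rightarrow> 'a" where
  "smash_counit C eF G eG X = cmp C (eG X) (eF (fo G X))"

definition smash_F2 :: "('o,'a,'z) moncat_scheme \<Rightarrow> ('o,'a,'o,'a) ftr \<Rightarrow> ('o \<Rightarrow> 'o \<Rightarrow> 'a) \<Rightarrow>
    ('o,'a,'o,'a) ftr \<Rightarrow> ('o \<Rightarrow> 'o \<Rightarrow> 'a) \<Rightarrow> 'o \<Rightarrow> 'o \<Rightarrow> 'a" where
  "smash_F2 M F F2 G G2 X Y = cmp M (fa F (G2 X Y)) (F2 (fo G X) (fo G Y))"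

definition smash_F0 :: "('o,'a,'z) moncat_scheme \<Rightarrow> ('o,'a,'o,'a) ftr \<Rightarrow> 'a \<Rightarrow> 'a \<Rightarrow> 'a" where
  "smash_F0 M F F0 G0 = cmp M (fa F G0) F0"

definition prod_cat :: "('o,'a,'z) cat_scheme \<Rightarrow> ('p,'b,'y) cat_scheme \<Rightarrow> ('o \<times> 'p, 'a \<times> 'b) cat" where
  "prod_cat C D = \<lparr> Ob = Ob C \<times> Ob D, Ar = Ar C \<times> Ar D,
     src = (\<lambda>(f, g). (src C f, src D g)), tgt = (\<lambda>(f, g). (tgt C f, tgt D g)),
     cmp = (\<lambda>(g, g') (f, f'). (cmp C g f, cmp D g' f')),
     idn = (\<lambda>(X, Y). (idn C X, idn D Y)) \<rparr>"

definition term_cat :: "(unit, unit) cat" where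
  "term_cat = \<lparr> Ob = UNIV, Ar = UNIV, src = (\<lambda>_. ()), tgt = (\<lambda>_. ()), cmp = (\<lambda>_ _. ()), idn = (\<lambda>_. ()) \<rparr>"

definition prod_ftr :: "('o,'a,'p,'b) ftr \<Rightarrow> ('q,'c,'r,'d) ftr \<Rightarrow> ('o \<times> 'q, 'a \<times> 'c, 'p \<times> 'r, 'b \<times> 'd) ftr" where
  "prod_ftr F G = \<lparr> fo = (\<lambda>(X, Y). (fo F X, fo G Y)), fa = (\<lambda>(f, g). (fa F f, fa G g)) \<rparr>"

definition prod_nt :: "('o \<Rightarrow> 'a) \<Rightarrow> ('p \<Rightarrow> 'b) \<Rightarrow> 'o \<times> 'p \<Rightarrow> 'a \<times> 'b" where
  "prod_nt \<eta> \<mu> = (\<lambda>(X, Y). (\<eta> X, \<mu> Y))"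

definition tens_ftr :: "('o,'a,'z) moncat_scheme \<Rightarrow> ('o \<times> 'o, 'a \<times> 'a, 'o, 'a) ftr" where
  "tens_ftr M = \<lparr> fo = (\<lambda>(X, Y). tns M X Y), fa = (\<lambda>(f, g). tnsa M f g) \<rparr>"

definition unit_ftr :: "('o,'a,'z) moncat_scheme \<Rightarrow> (unit, unit, 'o, 'a) ftr" where
  "unit_ftr M = \<lparr> fo = (\<lambda>_. munit M), fa = (\<lambda>_. idn M (munit M)) \<rparr>"

section \<open>The 2-categories Cmd(Cat) and CC(Cat): 1-cells and 2-cells\<close>

definition cmd_1cell :: "('o,'a,'z) cat_scheme \<Rightarrow> ('o,'a,'o,'a) ftr \<Rightarrow> ('o \<Rightarrow> 'a) \<Rightarrow> ('o \<Rightarrow> 'a) \<Rightarrow>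
    ('p,'b,'y) cat_scheme \<Rightarrow> ('p,'b,'p,'b) ftr \<Rightarrow> ('p \<Rightarrow> 'b) \<Rightarrow> ('p \<Rightarrow> 'b) \<Rightarrow>
    ('o,'a,'p,'b) ftr \<Rightarrow> ('o \<Rightarrow> 'b) \<Rightarrow> bool" where
  "cmd_1cell Y T d e Y' T' d' e' W w \<longleftrightarrow>
     comonad Y T d e \<and> comonad Y' T' d' e' \<and>
     is_functor Y Y' W \<and> nat_trans Y Y' (fcomp W T) (fcomp T' W) w \<and>
     (\<forall>X\<in>Ob Y.
        cmp Y' (d' (fo W X)) (w X) = cmp Y' (fa T' (w X)) (cmp Y' (w (fo T X)) (fa W (d X))) \<and>
        cmp Y' (e' (fo W X)) (w X) = fa W (e X))"

definition cmd_2cell :: "('o,'a,'z) cat_scheme \<Rightarrow> ('o,'a,'o,'a) ftr \<Rightarrow> ('o \<Rightarrow> 'a) \<Rightarrow> ('o \<Rightarrow> 'a) \<Rightarrow>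
    ('p,'b,'y) cat_scheme \<Rightarrow> ('p,'b,'p,'b) ftr \<Rightarrow> ('p \<Rightarrow> 'b) \<Rightarrow> ('p \<Rightarrow> 'b) \<Rightarrow>
    ('o,'a,'p,'b) ftr \<Rightarrow> ('o \<Rightarrow> 'b) \<Rightarrow> ('o,'a,'p,'b) ftr \<Rightarrow> ('o \<Rightarrow> 'b) \<Rightarrow> ('o \<Rightarrow> 'b) \<Rightarrow> bool" where
  "cmd_2cell Y T d e Y' T' d' e' W w V v \<chi> \<longleftrightarrow>
     cmd_1cell Y T d e Y' T' d' e' W w \<and> cmd_1cell Y T d e Y' T' d' e' V v \<and>
     nat_trans Y Y' W V \<chi> \<and>
     (\<forall>X\<in>Ob Y. cmp Y' (v X) (\<chi> (fo T X)) = cmp Y' (fa T' (\<chi> X)) (w X))"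

definition cc_0cell :: "('o,'a,'z) cat_scheme \<Rightarrow> ('o,'a,'o,'a) ftr \<Rightarrow> ('o \<Rightarrow> 'a) \<Rightarrow> ('o \<Rightarrow> 'a) \<Rightarrow>
    ('o,'a,'o,'a) ftr \<Rightarrow> ('o \<Rightarrow> 'a) \<Rightarrow> ('o \<Rightarrow> 'a) \<Rightarrow> ('o \<Rightarrow> 'a) \<Rightarrow> bool" where
  "cc_0cell C D DD eD T dT eT \<phi> \<longleftrightarrow>
     comonad C D DD eD \<and> comonad C T dT eT \<and> dist_law C D DD eD T dT eT \<phi>"

definition cc_1cell :: "('o,'a,'z) cat_scheme \<Rightarrow> ('o,'a,'o,'a) ftr \<Rightarrow> ('o \<Rightarrow> 'a) \<Rightarrow> ('o \<Rightarrow> 'a) \<Rightarrow>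
    ('o,'a,'o,'a) ftr \<Rightarrow> ('o \<Rightarrow> 'a) \<Rightarrow> ('o \<Rightarrow> 'a) \<Rightarrow> ('o \<Rightarrow> 'a) \<Rightarrow>
    ('p,'b,'y) cat_scheme \<Rightarrow> ('p,'b,'p,'b) ftr \<Rightarrow> ('p \<Rightarrow> 'b) \<Rightarrow> ('p \<Rightarrow> 'b) \<Rightarrow>
    ('p,'b,'p,'b) ftr \<Rightarrow> ('p \<Rightarrow> 'b) \<Rightarrow> ('p \<Rightarrow> 'b) \<Rightarrow> ('p \<Rightarrow> 'b) \<Rightarrow>
    ('o,'a,'p,'b) ftr \<Rightarrow> ('o \<Rightarrow> 'b) \<Rightarrow> ('o \<Rightarrow> 'b) \<Rightarrow> bool" where
  "cc_1cell C D DD eD T dT eT \<phi> C' D' DD' eD' T' dT' eT' \<phi>' J jd jt \<longleftrightarrow>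
     cc_0cell C D DD eD T dT eT \<phi> \<and> cc_0cell C' D' DD' eD' T' dT' eT' \<phi>' \<and>
     cmd_1cell C D DD eD C' D' DD' eD' J jd \<and>
     cmd_1cell C T dT eT C' T' dT' eT' J jt \<and>
     (\<forall>X\<in>Ob C.
        cmp C' (fa T' (jd X)) (cmp C' (jt (fo D X)) (fa J (\<phi> X))) =
        cmp C' (\<phi>' (fo J X)) (cmp C' (fa D' (jt X)) (jd (fo T X))))"

end

theory Submission
  imports Defs
begin

text \<open>Each of (1), (3), (4), (5) is equivalent to the monoidality (2) of \<open>\<phi>\<close>.
  For (4) and (5), all the structural conditions on the cells already follow from the bicomonad
  axioms and the distributive law; the one remaining compatibility condition is literally (2).
  For (3), \<open>F G\<close> is always a comonad and, as a composite of monoidal functors, a monoidal functor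
  whose counit respects the monoidal structure; compatibility of the smash comultiplication with
  the monoidal structure follows from (2) by a diagram chase, and conversely gives (2) after
  postcomposing with \<open>G F \<epsilon> \<circ> \<epsilon>\<^sub>G\<^sub>F\<^sub>G\<close>, which turns the smash comultiplication back into \<open>\<phi>\<close>.
  For (1), if \<open>\<phi>\<close> is monoidal then tensor products of bicomodules are bicomodules and the
  associator and unitors of \<open>\<C>\<close> are bicomodule isomorphisms. Conversely, the unit being a
  bicomodule is the unit half of (2), and the tensor product of the cofree bicomodules \<open>F G X\<close>
  and \<open>F G Y\<close> being a bicomodule gives the tensor half of (2) after projecting along the counits.\<close>

lemma ftr_simps [simp]:
  "fo (fcomp A B) X = fo A (fo B X)" "fa (fcomp A B) f = fa A (fa B f)"
  "fo id_ftr X = X" "fa id_ftr f = f"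
  unfolding fcomp_def id_ftr_def by simp_all

lemma prod_cat_simps [simp]:
  "Ob (prod_cat A B) = Ob A \<times> Ob B" "Ar (prod_cat A B) = Ar A \<times> Ar B"
  "src (prod_cat A B) (f, g) = (src A f, src B g)" "tgt (prod_cat A B) (f, g) = (tgt A f, tgt B g)"
  "cmp (prod_cat A B) (f, g) (f', g') = (cmp A f f', cmp B g g')"
  "idn (prod_cat A B) (X, Y) = (idn A X, idn B Y)"
  unfolding prod_cat_def by simp_all

lemma prod_ftr_simps [simp]:
  "fo (prod_ftr F G) (X, Y) = (fo F X, fo G Y)" "fa (prod_ftr F G) (f, g) = (fa F f, fa G g)"
  "prod_nt \<eta> \<mu> (X, Y) = (\<eta> X, \<mu> Y)"
  unfolding prod_ftr_def prod_nt_def by simp_all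

lemma tens_unit_ftr_simps [simp]:
  "fo (tens_ftr M) (X, Y) = tns M X Y" "fa (tens_ftr M) (f, g) = tnsa M f g"
  "fo (unit_ftr M) u = munit M" "fa (unit_ftr M) v = idn M (munit M)"
  unfolding tens_ftr_def unit_ftr_def by simp_all

lemma term_cat_simps [simp]:
  "Ob term_cat = UNIV" "Ar term_cat = UNIV" "src term_cat x = ()" "tgt term_cat x = ()"
  "cmp term_cat x y = ()" "idn term_cat u = ()"
  unfolding term_cat_def by simp_all

lemma hom_iff: "f \<in> hom C X Y \<longleftrightarrow> f \<in> Ar C \<and> src C f = X \<and> tgt C f = Y"
  unfolding hom_def by simp

lemma comonad_term_cat: "comonad term_cat id_ftr (\<lambda>_. ()) (\<lambda>_. ())"
  unfolding comonad_def is_functor_def nat_trans_def hom_iff by simp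

lemma comonad_prod_cat:
  "comonad C T d e \<Longrightarrow> comonad (prod_cat C C) (prod_ftr T T) (prod_nt d d) (prod_nt e e)"
  unfolding comonad_def is_functor_def nat_trans_def hom_iff by auto

lemma dist_law_term_cat:
  "dist_law term_cat id_ftr (\<lambda>_. ()) (\<lambda>_. ()) id_ftr (\<lambda>_. ()) (\<lambda>_. ()) (\<lambda>_. ())"
  unfolding dist_law_def nat_trans_def hom_iff by simp

lemma dist_law_prod_cat:
  "dist_law C A DA eA B dB eB \<psi> \<Longrightarrow>
   dist_law (prod_cat C C) (prod_ftr A A) (prod_nt DA DA) (prod_nt eA eA)
     (prod_ftr B B) (prod_nt dB dB) (prod_nt eB eB) (prod_nt \<psi> \<psi>)"
  unfolding dist_law_def nat_trans_def hom_iff by auto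

lemma nat_trans_prod_catI:
  assumes "\<And>X Y. X \<in> Ob C \<Longrightarrow> Y \<in> Ob C \<Longrightarrow>
      \<eta> (X, Y) \<in> Ar D \<and> src D (\<eta> (X, Y)) = fo A (X, Y) \<and> tgt D (\<eta> (X, Y)) = fo B (X, Y)"
    and "\<And>f g. f \<in> Ar C \<Longrightarrow> g \<in> Ar C \<Longrightarrow>
      cmp D (\<eta> (tgt C f, tgt C g)) (fa A (f, g)) = cmp D (fa B (f, g)) (\<eta> (src C f, src C g))"
  shows "nat_trans (prod_cat C C) D A B \<eta>"
  unfolding nat_trans_def hom_iff using assms by auto

lemma nat_trans_term_catI:
  assumes "\<eta> () \<in> Ar D" "src D (\<eta> ()) = fo A ()" "tgt D (\<eta> ()) = fo B ()"
    and "cmp D (\<eta> ()) (fa A ()) = cmp D (fa B ()) (\<eta> ())"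
  shows "nat_trans term_cat D A B \<eta>"
  unfolding nat_trans_def hom_iff using assms by auto

lemma cmd_1cell_prod_catI:
  assumes "comonad C T d e" "comonad D T' d' e'" "is_functor (prod_cat C C) D W"
    and "nat_trans (prod_cat C C) D (fcomp W (prod_ftr T T)) (fcomp T' W) w"
    and "\<And>X Y. X \<in> Ob C \<Longrightarrow> Y \<in> Ob C \<Longrightarrow> cmp D (d' (fo W (X, Y))) (w (X, Y)) =
      cmp D (fa T' (w (X, Y))) (cmp D (w (fo T X, fo T Y)) (fa W (d X, d Y)))"
    and "\<And>X Y. X \<in> Ob C \<Longrightarrow> Y \<in> Ob C \<Longrightarrow> cmp D (e' (fo W (X, Y))) (w (X, Y)) = fa W (e X, e Y)"
  shows "cmd_1cell (prod_cat C C) (prod_ftr T T) (prod_nt d d) (prod_nt e e) D T' d' e' W w"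
  unfolding cmd_1cell_def using assms comonad_prod_cat[OF assms(1)] by auto

lemma cmd_1cell_term_catI:
  assumes "comonad D T' d' e'" "is_functor term_cat D W"
    and "nat_trans term_cat D W (fcomp T' W) w"
    and "cmp D (d' (fo W ())) (w ()) = cmp D (fa T' (w ())) (cmp D (w ()) (fa W ()))"
    and "cmp D (e' (fo W ())) (w ()) = fa W ()"
  shows "cmd_1cell term_cat id_ftr (\<lambda>_. ()) (\<lambda>_. ()) D T' d' e' W w"
proof -
  have "fcomp W id_ftr = W" by (simp add: fcomp_def id_ftr_def)
  then show ?thesis unfolding cmd_1cell_def using assms comonad_term_cat by auto
qed

section \<open>Monoidal categories, monoidal functors and comodules\<close>

definition is_comodule :: "('o,'a,'z) cat_scheme \<Rightarrow> ('o,'a,'o,'a) ftr \<Rightarrow> ('o \<Rightarrow> 'a) \<Rightarrow> ('o \<Rightarrow> 'a) \<Rightarrow>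
    'o \<Rightarrow> 'a \<Rightarrow> bool" where
  "is_comodule C T d e X a \<longleftrightarrow>
     X \<in> Ob C \<and> a \<in> hom C X (fo T X) \<and> cmp C (d X) a = cmp C (fa T a) a \<and> cmp C (e X) a = idn C X"

locale monoidal_cat =
  fixes M :: "('o,'a) moncat"
  assumes monoidal: "monoidal_category M"
begin

abbreviation (input) comp (infixr "\<cdot>" 55) where "g \<cdot> f \<equiv> cmp M g f"
abbreviation (input) tensor_ar (infixr "\<otimes>" 60) where "f \<otimes> g \<equiv> tnsa M f g"
abbreviation (input) tensor_ob (infixr "\<odot>" 60) where "X \<odot> Y \<equiv> tns M X Y"
abbreviation (input) "I \<equiv> munit M"
abbreviation (input) "Ar' \<equiv> Ar M"
abbreviation (input) "Ob' \<equiv> Ob M"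
abbreviation (input) "s \<equiv> src M"
abbreviation (input) "tg \<equiv> tgt M"
abbreviation (input) "id' \<equiv> idn M"

lemma category: "is_category M"
  using monoidal unfolding monoidal_category_def by (elim conjE) blast

lemma src_Ob [simp]: "f \<in> Ar' \<Longrightarrow> s f \<in> Ob'"
  and tgt_Ob [simp]: "f \<in> Ar' \<Longrightarrow> tg f \<in> Ob'"
  using category unfolding is_category_def by blast+

lemma idn_simps [simp]:
  "X \<in> Ob' \<Longrightarrow> id' X \<in> Ar'" "X \<in> Ob' \<Longrightarrow> s (id' X) = X" "X \<in> Ob' \<Longrightarrow> tg (id' X) = X"
  using category unfolding is_category_def hom_def by blast+

lemma comp_simps [simp]:
  "f \<in> Ar' \<Longrightarrow> g \<in> Ar' \<Longrightarrow> tg f = s g \<Longrightarrow> g \<cdot> f \<in> Ar'"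
  "f \<in> Ar' \<Longrightarrow> g \<in> Ar' \<Longrightarrow> tg f = s g \<Longrightarrow> s (g \<cdot> f) = s f"
  "f \<in> Ar' \<Longrightarrow> g \<in> Ar' \<Longrightarrow> tg f = s g \<Longrightarrow> tg (g \<cdot> f) = tg g"
  using category unfolding is_category_def hom_def by blast+

lemma comp_idn_left [simp]: "f \<in> Ar' \<Longrightarrow> tg f = Y \<Longrightarrow> id' Y \<cdot> f = f"
  and comp_idn_right [simp]: "f \<in> Ar' \<Longrightarrow> s f = Y \<Longrightarrow> f \<cdot> id' Y = f"
  using category unfolding is_category_def by blast+

lemma comp_assoc [simp]:
  "f \<in> Ar' \<Longrightarrow> g \<in> Ar' \<Longrightarrow> h \<in> Ar' \<Longrightarrow> tg f = s g \<Longrightarrow> tg g = s h \<Longrightarrow> (h \<cdot> g) \<cdot> f = h \<cdot> (g \<cdot> f)"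
  using category unfolding is_category_def by metis

text \<open>Composites are kept right-associated by the simplifier, so an equation \<open>g \<cdot> f = r\<close>
  between composites only fires on a longer composite in the form below.\<close>

lemma comp_subst2:
  "g \<cdot> f = r \<Longrightarrow> f \<in> Ar' \<Longrightarrow> g \<in> Ar' \<Longrightarrow> tg f = s g \<Longrightarrow> y \<in> Ar' \<Longrightarrow> tg y = s f \<Longrightarrow>
   g \<cdot> (f \<cdot> y) = r \<cdot> y"
  by (metis comp_assoc)

lemma comp_subst3:
  "h \<cdot> (g \<cdot> f) = r \<Longrightarrow> f \<in> Ar' \<Longrightarrow> g \<in> Ar' \<Longrightarrow> h \<in> Ar' \<Longrightarrow> tg f = s g \<Longrightarrow> tg g = s h \<Longrightarrow>
   y \<in> Ar' \<Longrightarrow> tg y = s f \<Longrightarrow> h \<cdot> (g \<cdot> (f \<cdot> y)) = r \<cdot> y"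
  by (metis comp_assoc comp_simps)

lemma iso_inverse:
  "is_iso M f \<Longrightarrow> \<exists>g. g \<in> Ar' \<and> s g = tg f \<and> tg g = s f \<and> g \<cdot> f = id' (s f) \<and> f \<cdot> g = id' (tg f)"
  unfolding is_iso_def hom_def by blast

lemma unit_Ob [simp]: "I \<in> Ob'"
  and tns_Ob [simp]: "X \<in> Ob' \<Longrightarrow> Y \<in> Ob' \<Longrightarrow> X \<odot> Y \<in> Ob'"
  by (insert monoidal, unfold monoidal_category_def, (elim conjE; blast)+)

lemma tnsa_simps [simp]:
  "f \<in> Ar' \<Longrightarrow> g \<in> Ar' \<Longrightarrow> f \<otimes> g \<in> Ar'"
  "f \<in> Ar' \<Longrightarrow> g \<in> Ar' \<Longrightarrow> s (f \<otimes> g) = s f \<odot> s g"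
  "f \<in> Ar' \<Longrightarrow> g \<in> Ar' \<Longrightarrow> tg (f \<otimes> g) = tg f \<odot> tg g"
  by (insert monoidal, unfold monoidal_category_def hom_def, (elim conjE; blast)+)

lemma tnsa_idn [simp]: "X \<in> Ob' \<Longrightarrow> Y \<in> Ob' \<Longrightarrow> id' X \<otimes> id' Y = id' (X \<odot> Y)"
  using monoidal unfolding monoidal_category_def by (elim conjE) blast

lemma interchange:
  "f \<in> Ar' \<Longrightarrow> g \<in> Ar' \<Longrightarrow> f' \<in> Ar' \<Longrightarrow> g' \<in> Ar' \<Longrightarrow> tg f = s g \<Longrightarrow> tg f' = s g' \<Longrightarrow>
   (g \<cdot> f) \<otimes> (g' \<cdot> f') = (g \<otimes> g') \<cdot> (f \<otimes> f')"
  using monoidal unfolding monoidal_category_def by (elim conjE) blast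

lemma tensor_comp:
  "f \<in> Ar' \<Longrightarrow> g \<in> Ar' \<Longrightarrow> f' \<in> Ar' \<Longrightarrow> g' \<in> Ar' \<Longrightarrow> tg f = s g \<Longrightarrow> tg f' = s g' \<Longrightarrow>
   (g \<otimes> g') \<cdot> (f \<otimes> f') = (g \<cdot> f) \<otimes> (g' \<cdot> f')"
  by (simp add: interchange)

lemma tensor_comp3:
  "f \<in> Ar' \<Longrightarrow> g \<in> Ar' \<Longrightarrow> h \<in> Ar' \<Longrightarrow> f' \<in> Ar' \<Longrightarrow> g' \<in> Ar' \<Longrightarrow> h' \<in> Ar' \<Longrightarrow>
   tg f = s g \<Longrightarrow> tg f' = s g' \<Longrightarrow> tg g = s h \<Longrightarrow> tg g' = s h' \<Longrightarrow>
   (h \<otimes> h') \<cdot> ((g \<otimes> g') \<cdot> (f \<otimes> f')) = (h \<cdot> (g \<cdot> f)) \<otimes> (h' \<cdot> (g' \<cdot> f'))"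
  by (simp add: interchange)

lemma tensor_comp_idn_right:
  "a \<in> Ar' \<Longrightarrow> b \<in> Ar' \<Longrightarrow> tg b = s a \<Longrightarrow> Z \<in> Ob' \<Longrightarrow> (a \<cdot> b) \<otimes> id' Z = (a \<otimes> id' Z) \<cdot> (b \<otimes> id' Z)"
  using interchange[of b a "id' Z" "id' Z"] by simp

lemma tensor_comp_idn_left:
  "a \<in> Ar' \<Longrightarrow> b \<in> Ar' \<Longrightarrow> tg b = s a \<Longrightarrow> Z \<in> Ob' \<Longrightarrow> id' Z \<otimes> (a \<cdot> b) = (id' Z \<otimes> a) \<cdot> (id' Z \<otimes> b)"
  using interchange[of "id' Z" "id' Z" b a] by simp

lemma asc_simps [simp]:
  "X \<in> Ob' \<Longrightarrow> Y \<in> Ob' \<Longrightarrow> Z \<in> Ob' \<Longrightarrow> asc M X Y Z \<in> Ar'"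
  "X \<in> Ob' \<Longrightarrow> Y \<in> Ob' \<Longrightarrow> Z \<in> Ob' \<Longrightarrow> s (asc M X Y Z) = (X \<odot> Y) \<odot> Z"
  "X \<in> Ob' \<Longrightarrow> Y \<in> Ob' \<Longrightarrow> Z \<in> Ob' \<Longrightarrow> tg (asc M X Y Z) = X \<odot> (Y \<odot> Z)"
  by (insert monoidal, unfold monoidal_category_def hom_def, (elim conjE; blast)+)

lemma asc_iso: "X \<in> Ob' \<Longrightarrow> Y \<in> Ob' \<Longrightarrow> Z \<in> Ob' \<Longrightarrow> is_iso M (asc M X Y Z)"
  using monoidal unfolding monoidal_category_def by (elim conjE) blast

lemma unitor_simps [simp]:
  "X \<in> Ob' \<Longrightarrow> lu M X \<in> Ar'" "X \<in> Ob' \<Longrightarrow> s (lu M X) = I \<odot> X" "X \<in> Ob' \<Longrightarrow> tg (lu M X) = X"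
  "X \<in> Ob' \<Longrightarrow> ru M X \<in> Ar'" "X \<in> Ob' \<Longrightarrow> s (ru M X) = X \<odot> I" "X \<in> Ob' \<Longrightarrow> tg (ru M X) = X"
  by (insert monoidal, unfold monoidal_category_def hom_def, (elim conjE; blast)+)

lemma lu_iso: "X \<in> Ob' \<Longrightarrow> is_iso M (lu M X)"
  and ru_iso: "X \<in> Ob' \<Longrightarrow> is_iso M (ru M X)"
  by (insert monoidal, unfold monoidal_category_def, (elim conjE; blast)+)

lemma asc_natural:
  "f \<in> Ar' \<Longrightarrow> g \<in> Ar' \<Longrightarrow> h \<in> Ar' \<Longrightarrow>
   asc M (tg f) (tg g) (tg h) \<cdot> ((f \<otimes> g) \<otimes> h) = (f \<otimes> (g \<otimes> h)) \<cdot> asc M (s f) (s g) (s h)"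
  using monoidal unfolding monoidal_category_def by (elim conjE) blast

lemma lu_natural: "f \<in> Ar' \<Longrightarrow> lu M (tg f) \<cdot> (id' I \<otimes> f) = f \<cdot> lu M (s f)"
  and ru_natural: "f \<in> Ar' \<Longrightarrow> ru M (tg f) \<cdot> (f \<otimes> id' I) = f \<cdot> ru M (s f)"
  by (insert monoidal, unfold monoidal_category_def, (elim conjE; blast)+)

lemma pentagon:
  "\<forall>W\<in>Ob'. \<forall>X\<in>Ob'. \<forall>Y\<in>Ob'. \<forall>Z\<in>Ob'.
     (id' W \<otimes> asc M X Y Z) \<cdot> (asc M W (X \<odot> Y) Z \<cdot> (asc M W X Y \<otimes> id' Z)) =
     asc M W X (Y \<odot> Z) \<cdot> asc M (W \<odot> X) Y Z"
  using monoidal unfolding monoidal_category_def by (elim conjE) assumption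

lemma triangle:
  "\<forall>X\<in>Ob'. \<forall>Y\<in>Ob'. (id' X \<otimes> lu M Y) \<cdot> asc M X I Y = ru M X \<otimes> id' Y"
  using monoidal unfolding monoidal_category_def by (elim conjE) assumption

lemma functorD:
  assumes "is_functor M M T"
  shows "X \<in> Ob' \<Longrightarrow> fo T X \<in> Ob'" "f \<in> Ar' \<Longrightarrow> fa T f \<in> Ar'"
    "f \<in> Ar' \<Longrightarrow> s (fa T f) = fo T (s f)" "f \<in> Ar' \<Longrightarrow> tg (fa T f) = fo T (tg f)"
    "X \<in> Ob' \<Longrightarrow> fa T (id' X) = id' (fo T X)"
    "f \<in> Ar' \<Longrightarrow> g \<in> Ar' \<Longrightarrow> tg f = s g \<Longrightarrow> fa T (g \<cdot> f) = fa T g \<cdot> fa T f"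
  using assms unfolding is_functor_def hom_def by blast+

lemma functor_comp_eq:
  "is_functor M M T \<Longrightarrow> g \<cdot> f = r \<Longrightarrow> f \<in> Ar' \<Longrightarrow> g \<in> Ar' \<Longrightarrow> tg f = s g \<Longrightarrow>
   fa T g \<cdot> fa T f = fa T r"
  using functorD(6) by metis

lemma nat_transD:
  assumes "nat_trans M M A B \<eta>"
  shows "X \<in> Ob' \<Longrightarrow> \<eta> X \<in> Ar'" "X \<in> Ob' \<Longrightarrow> s (\<eta> X) = fo A X" "X \<in> Ob' \<Longrightarrow> tg (\<eta> X) = fo B X"
    "f \<in> Ar' \<Longrightarrow> \<eta> (tg f) \<cdot> fa A f = fa B f \<cdot> \<eta> (s f)"
  using assms unfolding nat_trans_def hom_def by blast+

lemma comonadD: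
  assumes "comonad M T d e"
  shows "is_functor M M T" "nat_trans M M T (fcomp T T) d" "nat_trans M M T id_ftr e"
    "X \<in> Ob' \<Longrightarrow> d (fo T X) \<cdot> d X = fa T (d X) \<cdot> d X"
    "X \<in> Ob' \<Longrightarrow> e (fo T X) \<cdot> d X = id' (fo T X)"
    "X \<in> Ob' \<Longrightarrow> fa T (e X) \<cdot> d X = id' (fo T X)"
  using assms unfolding comonad_def by blast+

lemma monoidal_functorD:
  assumes "monoidal_functor M T T2 T0"
  shows "is_functor M M T"
    "X \<in> Ob' \<Longrightarrow> Y \<in> Ob' \<Longrightarrow> T2 X Y \<in> Ar'"
    "X \<in> Ob' \<Longrightarrow> Y \<in> Ob' \<Longrightarrow> s (T2 X Y) = fo T X \<odot> fo T Y"
    "X \<in> Ob' \<Longrightarrow> Y \<in> Ob' \<Longrightarrow> tg (T2 X Y) = fo T (X \<odot> Y)"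
    "f \<in> Ar' \<Longrightarrow> g \<in> Ar' \<Longrightarrow> T2 (tg f) (tg g) \<cdot> (fa T f \<otimes> fa T g) = fa T (f \<otimes> g) \<cdot> T2 (s f) (s g)"
    "T0 \<in> Ar'" "s T0 = I" "tg T0 = fo T I"
    "X \<in> Ob' \<Longrightarrow> Y \<in> Ob' \<Longrightarrow> Z \<in> Ob' \<Longrightarrow>
       fa T (asc M X Y Z) \<cdot> (T2 (X \<odot> Y) Z \<cdot> (T2 X Y \<otimes> id' (fo T Z))) =
       T2 X (Y \<odot> Z) \<cdot> ((id' (fo T X) \<otimes> T2 Y Z) \<cdot> asc M (fo T X) (fo T Y) (fo T Z))"
    "X \<in> Ob' \<Longrightarrow> fa T (lu M X) \<cdot> (T2 I X \<cdot> (T0 \<otimes> id' (fo T X))) = lu M (fo T X)"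
    "X \<in> Ob' \<Longrightarrow> fa T (ru M X) \<cdot> (T2 X I \<cdot> (id' (fo T X) \<otimes> T0)) = ru M (fo T X)"
  using assms unfolding monoidal_functor_def hom_def by blast+

lemma bicomonadD:
  assumes "bicomonad M T d e T2 T0"
  shows "comonad M T d e" "monoidal_functor M T T2 T0"
    "X \<in> Ob' \<Longrightarrow> Y \<in> Ob' \<Longrightarrow>
       fa T (T2 X Y) \<cdot> (T2 (fo T X) (fo T Y) \<cdot> (d X \<otimes> d Y)) = d (X \<odot> Y) \<cdot> T2 X Y"
    "X \<in> Ob' \<Longrightarrow> Y \<in> Ob' \<Longrightarrow> e (X \<odot> Y) \<cdot> T2 X Y = e X \<otimes> e Y"
    "fa T T0 \<cdot> T0 = d I \<cdot> T0"
    "e I \<cdot> T0 = id' I"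
  using assms unfolding bicomonad_def by blast+

lemma dist_lawD:
  assumes "dist_law M A DA eA B dB eB \<psi>"
  shows "nat_trans M M (fcomp A B) (fcomp B A) \<psi>"
    "X \<in> Ob' \<Longrightarrow> fa B (\<psi> X) \<cdot> (\<psi> (fo B X) \<cdot> fa A (dB X)) = dB (fo A X) \<cdot> \<psi> X"
    "X \<in> Ob' \<Longrightarrow> \<psi> (fo A X) \<cdot> (fa A (\<psi> X) \<cdot> DA (fo B X)) = fa B (DA X) \<cdot> \<psi> X"
    "X \<in> Ob' \<Longrightarrow> fa B (eA X) \<cdot> \<psi> X = eA (fo B X)"
    "X \<in> Ob' \<Longrightarrow> eB (fo A X) \<cdot> \<psi> X = fa A (eB X)"
  using assms unfolding dist_law_def by blast+

lemma is_functor_fcomp: "is_functor M M T \<Longrightarrow> is_functor M M S \<Longrightarrow> is_functor M M (fcomp T S)"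
  unfolding is_functor_def hom_iff by auto

lemma is_functor_tens_ftr: "is_functor (prod_cat M M) M (tens_ftr M)"
  unfolding is_functor_def hom_iff by (auto simp: interchange)

lemma is_functor_unit_ftr: "is_functor term_cat M (unit_ftr M)"
  unfolding is_functor_def hom_iff by auto

lemma is_functor_tens_ftr_after:
  "is_functor M M T \<Longrightarrow> is_functor (prod_cat M M) M (fcomp (tens_ftr M) (prod_ftr T T))"
  unfolding is_functor_def hom_iff by (auto simp: interchange)

lemma is_functor_tens_ftr_before:
  "is_functor M M T \<Longrightarrow> is_functor (prod_cat M M) M (fcomp T (tens_ftr M))"
  unfolding is_functor_def hom_iff by (auto simp: interchange)

lemma is_functor_unit_ftr_before: "is_functor M M T \<Longrightarrow> is_functor term_cat M (fcomp T (unit_ftr M))"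
  unfolding is_functor_def hom_iff by auto

lemma monoidal_functor_natural_left:
  assumes "monoidal_functor M T T2 T0" "f \<in> Ar'" "B \<in> Ob'" "tg f = A"
  shows "T2 A B \<cdot> (fa T f \<otimes> id' (fo T B)) = fa T (f \<otimes> id' B) \<cdot> T2 (s f) B"
  using assms monoidal_functorD(5)[OF assms(1), of f "id' B"] functorD[OF monoidal_functorD(1)[OF assms(1)]]
  by simp

lemma monoidal_functor_natural_right:
  assumes "monoidal_functor M T T2 T0" "g \<in> Ar'" "A \<in> Ob'"
  shows "tg g = B \<Longrightarrow> T2 A B \<cdot> (id' (fo T A) \<otimes> fa T g) = fa T (id' A \<otimes> g) \<cdot> T2 A (s g)"
    and "s g = B \<Longrightarrow> fa T (id' A \<otimes> g) \<cdot> T2 A B = T2 A (tg g) \<cdot> (id' (fo T A) \<otimes> fa T g)"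
  using assms monoidal_functorD(5)[OF assms(1), of "id' A" g] functorD[OF monoidal_functorD(1)[OF assms(1)]]
  by simp_all

lemma monoidal_functor_fcomp_asc:
  assumes MT: "monoidal_functor M T T2 T0" and MS: "monoidal_functor M S S2 S0"
    and X: "X \<in> Ob'" and Y: "Y \<in> Ob'" and Z: "Z \<in> Ob'"
  shows "fa T (fa S (asc M X Y Z)) \<cdot>
      ((fa T (S2 (X \<odot> Y) Z) \<cdot> T2 (fo S (X \<odot> Y)) (fo S Z)) \<cdot>
        ((fa T (S2 X Y) \<cdot> T2 (fo S X) (fo S Y)) \<otimes> id' (fo T (fo S Z)))) =
    (fa T (S2 X (Y \<odot> Z)) \<cdot> T2 (fo S X) (fo S (Y \<odot> Z))) \<cdot>
      ((id' (fo T (fo S X)) \<otimes> (fa T (S2 Y Z) \<cdot> T2 (fo S Y) (fo S Z))) \<cdot>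
        asc M (fo T (fo S X)) (fo T (fo S Y)) (fo T (fo S Z)))"
proof -
  note FT = monoidal_functorD(1)[OF MT] and FS = monoidal_functorD(1)[OF MS]
  note [simp] = functorD[OF FT] functorD[OF FS] monoidal_functorD(2-4,6-8)[OF MT]
    monoidal_functorD(2-4,6-8)[OF MS]
  have S_asc: "fa T (fa S (asc M X Y Z)) \<cdot> (fa T (S2 (X \<odot> Y) Z) \<cdot> fa T (S2 X Y \<otimes> id' (fo S Z))) =
      fa T (S2 X (Y \<odot> Z)) \<cdot> (fa T (id' (fo S X) \<otimes> S2 Y Z) \<cdot> fa T (asc M (fo S X) (fo S Y) (fo S Z)))"
    using X Y Z monoidal_functorD(9)[OF MS X Y Z] by (simp flip: functorD(6)[OF FT])
  show ?thesis
    using X Y Z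
    by (simp add: tensor_comp_idn_right tensor_comp_idn_left
        comp_subst2[OF monoidal_functor_natural_left[OF MT]] comp_subst3[OF S_asc]
        monoidal_functorD(9)[OF MT] comp_subst3[OF monoidal_functorD(9)[OF MT]]
        comp_subst2[OF monoidal_functor_natural_right(2)[OF MT]])
qed

lemma monoidal_functor_fcomp_unitors:
  assumes MT: "monoidal_functor M T T2 T0" and MS: "monoidal_functor M S S2 S0" and X: "X \<in> Ob'"
  shows "fa T (fa S (lu M X)) \<cdot> ((fa T (S2 I X) \<cdot> T2 (fo S I) (fo S X)) \<cdot>
      ((fa T S0 \<cdot> T0) \<otimes> id' (fo T (fo S X)))) = lu M (fo T (fo S X))"
    and "fa T (fa S (ru M X)) \<cdot> ((fa T (S2 X I) \<cdot> T2 (fo S X) (fo S I)) \<cdot>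
      (id' (fo T (fo S X)) \<otimes> (fa T S0 \<cdot> T0))) = ru M (fo T (fo S X))"
proof -
  note FT = monoidal_functorD(1)[OF MT] and FS = monoidal_functorD(1)[OF MS]
  note [simp] = functorD[OF FT] functorD[OF FS] monoidal_functorD(2-4,6-8)[OF MT]
    monoidal_functorD(2-4,6-8)[OF MS]
  have S_lu: "fa T (fa S (lu M X)) \<cdot> (fa T (S2 I X) \<cdot> fa T (S0 \<otimes> id' (fo S X))) = fa T (lu M (fo S X))"
    using X monoidal_functorD(10)[OF MS X] by (simp flip: functorD(6)[OF FT])
  have S_ru: "fa T (fa S (ru M X)) \<cdot> (fa T (S2 X I) \<cdot> fa T (id' (fo S X) \<otimes> S0)) = fa T (ru M (fo S X))"
    using X monoidal_functorD(11)[OF MS X] by (simp flip: functorD(6)[OF FT])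
  show "fa T (fa S (lu M X)) \<cdot> ((fa T (S2 I X) \<cdot> T2 (fo S I) (fo S X)) \<cdot>
      ((fa T S0 \<cdot> T0) \<otimes> id' (fo T (fo S X)))) = lu M (fo T (fo S X))"
    using X by (simp add: tensor_comp_idn_right comp_subst2[OF monoidal_functor_natural_left[OF MT]]
        comp_subst3[OF S_lu] monoidal_functorD(10)[OF MT])
  show "fa T (fa S (ru M X)) \<cdot> ((fa T (S2 X I) \<cdot> T2 (fo S X) (fo S I)) \<cdot>
      (id' (fo T (fo S X)) \<otimes> (fa T S0 \<cdot> T0))) = ru M (fo T (fo S X))"
    using X by (simp add: tensor_comp_idn_left comp_subst2[OF monoidal_functor_natural_right(1)[OF MT]]
        comp_subst3[OF S_ru] monoidal_functorD(11)[OF MT])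
qed

lemma monoidal_functor_fcomp:
  assumes MT: "monoidal_functor M T T2 T0" and MS: "monoidal_functor M S S2 S0"
  shows "monoidal_functor M (fcomp T S) (\<lambda>X Y. fa T (S2 X Y) \<cdot> T2 (fo S X) (fo S Y)) (fa T S0 \<cdot> T0)"
proof -
  note FT = monoidal_functorD(1)[OF MT] and FS = monoidal_functorD(1)[OF MS]
  note [simp] = functorD[OF FT] functorD[OF FS] monoidal_functorD(2-4,6-8)[OF MT]
    monoidal_functorD(2-4,6-8)[OF MS]
  have T2S2_nat: "(fa T (S2 (tg f) (tg g)) \<cdot> T2 (fo S (tg f)) (fo S (tg g))) \<cdot> (fa T (fa S f) \<otimes> fa T (fa S g)) =
      fa T (fa S (f \<otimes> g)) \<cdot> (fa T (S2 (s f) (s g)) \<cdot> T2 (fo S (s f)) (fo S (s g)))"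
    if fg: "f \<in> Ar'" "g \<in> Ar'" for f g
  proof -
    have S_nat: "fa T (S2 (tg f) (tg g)) \<cdot> fa T (fa S f \<otimes> fa S g) =
        fa T (fa S (f \<otimes> g)) \<cdot> fa T (S2 (s f) (s g))"
      using functor_comp_eq[OF FT monoidal_functorD(5)[OF MS fg]] fg by simp
    show ?thesis
      using fg monoidal_functorD(5)[OF MT, of "fa S f" "fa S g"] by (simp add: comp_subst2[OF S_nat])
  qed
  show ?thesis
    unfolding monoidal_functor_def
    using is_functor_fcomp[OF FT FS] T2S2_nat monoidal_functor_fcomp_asc[OF MT MS]
      monoidal_functor_fcomp_unitors[OF MT MS]
    by (simp add: hom_iff)
qed

lemma bicomonad_tensor_cmd_1cell:
  assumes B: "bicomonad M T d e T2 T0"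
  shows "cmd_1cell (prod_cat M M) (prod_ftr T T) (prod_nt d d) (prod_nt e e) M T d e
           (tens_ftr M) (\<lambda>(X, Y). T2 X Y)"
proof -
  note C = bicomonadD(1)[OF B] and MT = bicomonadD(2)[OF B]
  note [simp] = functorD[OF comonadD(1)[OF C]] nat_transD(1-3)[OF comonadD(2)[OF C], simplified]
    nat_transD(1-3)[OF comonadD(3)[OF C], simplified] monoidal_functorD(2-4,6-8)[OF MT]
  show ?thesis
  proof (rule cmd_1cell_prod_catI[OF C C is_functor_tens_ftr])
    show "nat_trans (prod_cat M M) M (fcomp (tens_ftr M) (prod_ftr T T)) (fcomp T (tens_ftr M))
        (\<lambda>(X, Y). T2 X Y)"
      by (rule nat_trans_prod_catI) (use monoidal_functorD(5)[OF MT] in auto)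
  qed (use bicomonadD(3,4)[OF B] in auto)
qed

lemma bicomonad_unit_cmd_1cell:
  assumes B: "bicomonad M T d e T2 T0"
  shows "cmd_1cell term_cat id_ftr (\<lambda>_. ()) (\<lambda>_. ()) M T d e (unit_ftr M) (\<lambda>_. T0)"
proof -
  note C = bicomonadD(1)[OF B] and MT = bicomonadD(2)[OF B]
  note [simp] = functorD[OF comonadD(1)[OF C]] monoidal_functorD(6-8)[OF MT]
  show ?thesis
    by (rule cmd_1cell_term_catI[OF C is_functor_unit_ftr], rule nat_trans_term_catI)
      (use bicomonadD(5,6)[OF B] in auto)
qed

lemma coaction_inverse:
  assumes T: "is_functor M M T"
    and f: "f \<in> Ar'" "s f = X" "tg f = Y" and g: "g \<in> Ar'" "s g = Y" "tg g = X"
    and inv: "g \<cdot> f = id' X" "f \<cdot> g = id' Y"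
    and a: "a \<in> Ar'" "s a = X" "tg a = fo T X" and b: "b \<in> Ar'" "s b = Y" "tg b = fo T Y"
    and mor: "b \<cdot> f = fa T f \<cdot> a"
  shows "a \<cdot> g = fa T g \<cdot> b"
proof -
  note [simp] = functorD[OF T]
  have Tinv: "fa T g \<cdot> fa T f = id' (fo T X)"
    using functor_comp_eq[OF T inv(1)] f g src_Ob[OF f(1)] by simp
  have "fa T g \<cdot> b = fa T g \<cdot> (b \<cdot> (f \<cdot> g))" using inv(2) b g by simp
  also have "\<dots> = fa T g \<cdot> (fa T f \<cdot> (a \<cdot> g))" using comp_subst2[OF mor, of g] f g a b by simp
  also have "\<dots> = a \<cdot> g" using f g a by (simp add: comp_subst2[OF Tinv])
  finally show ?thesis by simp
qed

lemma is_comodule_iff: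
  "is_comodule M T d e X a \<longleftrightarrow>
     X \<in> Ob' \<and> a \<in> Ar' \<and> s a = X \<and> tg a = fo T X \<and> d X \<cdot> a = fa T a \<cdot> a \<and> e X \<cdot> a = id' X"
  unfolding is_comodule_def hom_iff by auto

lemma comodule_tensor:
  assumes B: "bicomonad M T d e T2 T0"
    and "is_comodule M T d e X a" "is_comodule M T d e Y b"
  shows "is_comodule M T d e (X \<odot> Y) (T2 X Y \<cdot> (a \<otimes> b))"
proof -
  note C = bicomonadD(1)[OF B] and MT = bicomonadD(2)[OF B]
  note [simp] = functorD[OF comonadD(1)[OF C]] nat_transD(1-3)[OF comonadD(2)[OF C], simplified]
    nat_transD(1-3)[OF comonadD(3)[OF C], simplified] monoidal_functorD(2-4,6-8)[OF MT]
  note X = assms(2)[unfolded is_comodule_iff] and Y = assms(3)[unfolded is_comodule_iff]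
  have T2_nat: "\<And>f g. f \<in> Ar' \<Longrightarrow> g \<in> Ar' \<Longrightarrow> s f = X \<Longrightarrow> s g = Y \<Longrightarrow>
      fa T (f \<otimes> g) \<cdot> T2 X Y = T2 (tg f) (tg g) \<cdot> (fa T f \<otimes> fa T g)"
    using monoidal_functorD(5)[OF MT] by metis
  have d_T2: "d (X \<odot> Y) \<cdot> T2 X Y = fa T (T2 X Y) \<cdot> (T2 (fo T X) (fo T Y) \<cdot> (d X \<otimes> d Y))"
    using bicomonadD(3)[OF B] X Y by simp
  have "d (X \<odot> Y) \<cdot> (T2 X Y \<cdot> (a \<otimes> b)) = fa T (T2 X Y \<cdot> (a \<otimes> b)) \<cdot> (T2 X Y \<cdot> (a \<otimes> b))"
    using X Y by (simp add: comp_subst2[OF d_T2] tensor_comp comp_subst2[OF tensor_comp] T2_nat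
        comp_subst2[OF T2_nat])
  moreover have "e (X \<odot> Y) \<cdot> (T2 X Y \<cdot> (a \<otimes> b)) = id' (X \<odot> Y)"
    using X Y by (simp add: comp_subst2[OF bicomonadD(4)[OF B]] tensor_comp)
  ultimately show ?thesis using X Y unfolding is_comodule_iff by simp
qed

lemma comodule_unit:
  assumes B: "bicomonad M T d e T2 T0"
  shows "is_comodule M T d e I T0"
  using bicomonadD(2,5,6)[OF B] monoidal_functorD(6-8) unfolding is_comodule_iff by simp

lemma coaction_tensor_natural:
  assumes MT: "monoidal_functor M T T2 T0"
    and f: "f \<in> Ar'" "s f = X" "tg f = X2" and g: "g \<in> Ar'" "s g = Y" "tg g = Y2"
    and a: "a \<in> Ar'" "s a = X" "tg a = fo T X" and a2: "a2 \<in> Ar'" "s a2 = X2" "tg a2 = fo T X2"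
    and b: "b \<in> Ar'" "s b = Y" "tg b = fo T Y" and b2: "b2 \<in> Ar'" "s b2 = Y2" "tg b2 = fo T Y2"
    and "a2 \<cdot> f = fa T f \<cdot> a" and "b2 \<cdot> g = fa T g \<cdot> b"
  shows "(T2 X2 Y2 \<cdot> (a2 \<otimes> b2)) \<cdot> (f \<otimes> g) = fa T (f \<otimes> g) \<cdot> (T2 X Y \<cdot> (a \<otimes> b))"
proof -
  note [simp] = functorD[OF monoidal_functorD(1)[OF MT]] monoidal_functorD(2-4)[OF MT]
  have T2_nat: "fa T (f \<otimes> g) \<cdot> T2 X Y = T2 X2 Y2 \<cdot> (fa T f \<otimes> fa T g)"
    using monoidal_functorD(5)[OF MT f(1) g(1)] f g by simp
  have "X \<in> Ob'" "X2 \<in> Ob'" "Y \<in> Ob'" "Y2 \<in> Ob'" using f g src_Ob tgt_Ob by blast+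
  then show ?thesis using assms by (simp add: comp_subst2[OF T2_nat] tensor_comp)
qed

lemma coaction_asc:
  assumes MT: "monoidal_functor M T T2 T0"
    and a: "a \<in> Ar'" "s a = X" "tg a = fo T X" and b: "b \<in> Ar'" "s b = Y" "tg b = fo T Y"
    and c: "c \<in> Ar'" "s c = Z" "tg c = fo T Z"
  shows "(T2 X (Y \<odot> Z) \<cdot> (a \<otimes> (T2 Y Z \<cdot> (b \<otimes> c)))) \<cdot> asc M X Y Z =
     fa T (asc M X Y Z) \<cdot> (T2 (X \<odot> Y) Z \<cdot> ((T2 X Y \<cdot> (a \<otimes> b)) \<otimes> c))"
proof -
  note [simp] = functorD[OF monoidal_functorD(1)[OF MT]] monoidal_functorD(2-4)[OF MT]
  have O: "X \<in> Ob'" "Y \<in> Ob'" "Z \<in> Ob'" using a b c src_Ob by blast+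
  have split: "(T2 X Y \<cdot> (a \<otimes> b)) \<otimes> c = (T2 X Y \<otimes> id' (fo T Z)) \<cdot> ((a \<otimes> b) \<otimes> c)"
    using interchange[of "a \<otimes> b" "T2 X Y" c "id' (fo T Z)"] O a b c by simp
  have asc_natural: "asc M (fo T X) (fo T Y) (fo T Z) \<cdot> ((a \<otimes> b) \<otimes> c) = (a \<otimes> (b \<otimes> c)) \<cdot> asc M X Y Z"
    using asc_natural[OF a(1) b(1) c(1)] a b c by simp
  have "fa T (asc M X Y Z) \<cdot> (T2 (X \<odot> Y) Z \<cdot> ((T2 X Y \<cdot> (a \<otimes> b)) \<otimes> c)) =
      fa T (asc M X Y Z) \<cdot> (T2 (X \<odot> Y) Z \<cdot> ((T2 X Y \<otimes> id' (fo T Z)) \<cdot> ((a \<otimes> b) \<otimes> c)))"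
    by (simp only: split)
  also have "\<dots> = T2 X (Y \<odot> Z) \<cdot> ((id' (fo T X) \<otimes> T2 Y Z) \<cdot>
      (asc M (fo T X) (fo T Y) (fo T Z) \<cdot> ((a \<otimes> b) \<otimes> c)))"
    using O a b c by (simp add: comp_subst3[OF monoidal_functorD(9)[OF MT]])
  also have "\<dots> = T2 X (Y \<odot> Z) \<cdot> ((id' (fo T X) \<otimes> T2 Y Z) \<cdot> ((a \<otimes> (b \<otimes> c)) \<cdot> asc M X Y Z))"
    by (simp only: asc_natural)
  also have "\<dots> = (T2 X (Y \<odot> Z) \<cdot> (a \<otimes> (T2 Y Z \<cdot> (b \<otimes> c)))) \<cdot> asc M X Y Z"
    using O a b c by (simp add: tensor_comp comp_subst2[OF tensor_comp])
  finally show ?thesis by simp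
qed

lemma coaction_unitors:
  assumes MT: "monoidal_functor M T T2 T0" and a: "a \<in> Ar'" "s a = X" "tg a = fo T X"
  shows "a \<cdot> lu M X = fa T (lu M X) \<cdot> (T2 I X \<cdot> (T0 \<otimes> a))"
    and "a \<cdot> ru M X = fa T (ru M X) \<cdot> (T2 X I \<cdot> (a \<otimes> T0))"
proof -
  note [simp] = functorD[OF monoidal_functorD(1)[OF MT]] monoidal_functorD(2-4,6-8)[OF MT]
  have X: "X \<in> Ob'" using a src_Ob by blast
  have split_l: "T0 \<otimes> a = (T0 \<otimes> id' (fo T X)) \<cdot> (id' I \<otimes> a)"
    using interchange[of "id' I" T0 a "id' (fo T X)"] X a by simp
  have split_r: "a \<otimes> T0 = (id' (fo T X) \<otimes> T0) \<cdot> (a \<otimes> id' I)"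
    using interchange[of a "id' (fo T X)" "id' I" T0] X a by simp
  have "fa T (lu M X) \<cdot> (T2 I X \<cdot> (T0 \<otimes> a)) =
      fa T (lu M X) \<cdot> (T2 I X \<cdot> ((T0 \<otimes> id' (fo T X)) \<cdot> (id' I \<otimes> a)))"
    by (simp only: split_l)
  also have "\<dots> = lu M (fo T X) \<cdot> (id' I \<otimes> a)"
    using X a by (simp add: comp_subst3[OF monoidal_functorD(10)[OF MT]])
  also have "\<dots> = a \<cdot> lu M X" using lu_natural[OF a(1)] a by simp
  finally show "a \<cdot> lu M X = fa T (lu M X) \<cdot> (T2 I X \<cdot> (T0 \<otimes> a))" by simp
  have "fa T (ru M X) \<cdot> (T2 X I \<cdot> (a \<otimes> T0)) =
      fa T (ru M X) \<cdot> (T2 X I \<cdot> ((id' (fo T X) \<otimes> T0) \<cdot> (a \<otimes> id' I)))"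
    by (simp only: split_r)
  also have "\<dots> = ru M (fo T X) \<cdot> (a \<otimes> id' I)"
    using X a by (simp add: comp_subst3[OF monoidal_functorD(11)[OF MT]])
  also have "\<dots> = a \<cdot> ru M X" using ru_natural[OF a(1)] a by simp
  finally show "a \<cdot> ru M X = fa T (ru M X) \<cdot> (T2 X I \<cdot> (a \<otimes> T0))" by simp
qed

end

locale bicomonads_with_dist_law = monoidal_cat M for M :: "('o,'a) moncat" +
  fixes F :: "('o,'a,'o,'a) ftr" and DF eF :: "'o \<Rightarrow> 'a" and F2 :: "'o \<Rightarrow> 'o \<Rightarrow> 'a" and F0 :: 'a
    and G :: "('o,'a,'o,'a) ftr" and dG eG :: "'o \<Rightarrow> 'a" and G2 :: "'o \<Rightarrow> 'o \<Rightarrow> 'a" and G0 :: 'a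
    and \<phi> :: "'o \<Rightarrow> 'a"
  assumes F_bicomonad: "bicomonad M F DF eF F2 F0"
    and G_bicomonad: "bicomonad M G dG eG G2 G0"
    and dist_law: "dist_law M F DF eF G dG eG \<phi>"
begin

abbreviation (input) "F1 \<equiv> fo F"
abbreviation (input) "Fa \<equiv> fa F"
abbreviation (input) "G1 \<equiv> fo G"
abbreviation (input) "Ga \<equiv> fa G"

lemmas F_comonad = bicomonadD(1)[OF F_bicomonad]
lemmas F_monoidal = bicomonadD(2)[OF F_bicomonad]
lemmas F_functor = comonadD(1)[OF F_comonad]
lemmas G_comonad = bicomonadD(1)[OF G_bicomonad]
lemmas G_monoidal = bicomonadD(2)[OF G_bicomonad]
lemmas G_functor = comonadD(1)[OF G_comonad]

lemmas F_simps [simp] = functorD(1-5)[OF F_functor]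
lemmas G_simps [simp] = functorD(1-5)[OF G_functor]
lemmas F_comp [simp] = functorD(6)[OF F_functor]
lemmas G_comp [simp] = functorD(6)[OF G_functor]
lemmas F_comp_eq = functor_comp_eq[OF F_functor]
lemmas G_comp_eq = functor_comp_eq[OF G_functor]
lemmas DF_simps [simp] = nat_transD(1-3)[OF comonadD(2)[OF F_comonad], simplified]
lemmas eF_simps [simp] = nat_transD(1-3)[OF comonadD(3)[OF F_comonad], simplified]
lemmas dG_simps [simp] = nat_transD(1-3)[OF comonadD(2)[OF G_comonad], simplified]
lemmas eG_simps [simp] = nat_transD(1-3)[OF comonadD(3)[OF G_comonad], simplified]
lemmas F2_simps [simp] = monoidal_functorD(2-4,6-8)[OF F_monoidal]
lemmas G2_simps [simp] = monoidal_functorD(2-4,6-8)[OF G_monoidal]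
lemmas phi_simps [simp] = nat_transD(1-3)[OF dist_lawD(1)[OF dist_law], simplified]

lemmas F2_nat = monoidal_functorD(5)[OF F_monoidal]
lemmas G2_nat = monoidal_functorD(5)[OF G_monoidal]
lemmas phi_nat = nat_transD(4)[OF dist_lawD(1)[OF dist_law], simplified]
lemmas phi_comult = dist_lawD(2)[OF dist_law]
lemmas phi_DF = dist_lawD(3)[OF dist_law]
lemmas phi_eF = dist_lawD(4)[OF dist_law]
lemmas phi_eG = dist_lawD(5)[OF dist_law]
lemmas F_coassoc = comonadD(4)[OF F_comonad]
lemmas F_counit_left = comonadD(5)[OF F_comonad]
lemmas F_counit_right = comonadD(6)[OF F_comonad]
lemmas G_coassoc = comonadD(4)[OF G_comonad]
lemmas G_counit_left = comonadD(5)[OF G_comonad]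
lemmas G_counit_right = comonadD(6)[OF G_comonad]
lemmas F2_DF = bicomonadD(3)[OF F_bicomonad]
lemmas F2_eF = bicomonadD(4)[OF F_bicomonad]
lemmas F0_DF = bicomonadD(5)[OF F_bicomonad]
lemmas F0_eF = bicomonadD(6)[OF F_bicomonad]
lemmas G2_dG = bicomonadD(3)[OF G_bicomonad]
lemmas G2_eG = bicomonadD(4)[OF G_bicomonad]
lemmas G0_dG = bicomonadD(5)[OF G_bicomonad]
lemmas G0_eG = bicomonadD(6)[OF G_bicomonad]

lemma DF_natL: "f \<in> Ar' \<Longrightarrow> tg f = Y \<Longrightarrow> DF Y \<cdot> Fa f = Fa (Fa f) \<cdot> DF (s f)"
  and eF_natL: "f \<in> Ar' \<Longrightarrow> tg f = Y \<Longrightarrow> eF Y \<cdot> Fa f = f \<cdot> eF (s f)"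
  and dG_natL: "f \<in> Ar' \<Longrightarrow> tg f = Y \<Longrightarrow> dG Y \<cdot> Ga f = Ga (Ga f) \<cdot> dG (s f)"
  and eG_natL: "f \<in> Ar' \<Longrightarrow> tg f = Y \<Longrightarrow> eG Y \<cdot> Ga f = f \<cdot> eG (s f)"
  and phi_natL: "f \<in> Ar' \<Longrightarrow> tg f = Y \<Longrightarrow> \<phi> Y \<cdot> Fa (Ga f) = Ga (Fa f) \<cdot> \<phi> (s f)"
  and phi_natR: "f \<in> Ar' \<Longrightarrow> s f = X \<Longrightarrow> Ga (Fa f) \<cdot> \<phi> X = \<phi> (tg f) \<cdot> Fa (Ga f)"
  using nat_transD(4)[OF comonadD(2)[OF F_comonad]] nat_transD(4)[OF comonadD(3)[OF F_comonad]]
    nat_transD(4)[OF comonadD(2)[OF G_comonad]] nat_transD(4)[OF comonadD(3)[OF G_comonad]] phi_nat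
  by (simp_all, metis+)

lemma F2_natR:
  "f \<in> Ar' \<Longrightarrow> g \<in> Ar' \<Longrightarrow> s f = X \<Longrightarrow> s g = Y \<Longrightarrow> Fa (f \<otimes> g) \<cdot> F2 X Y = F2 (tg f) (tg g) \<cdot> (Fa f \<otimes> Fa g)"
  and G2_natR:
  "f \<in> Ar' \<Longrightarrow> g \<in> Ar' \<Longrightarrow> s f = X \<Longrightarrow> s g = Y \<Longrightarrow> Ga (f \<otimes> g) \<cdot> G2 X Y = G2 (tg f) (tg g) \<cdot> (Ga f \<otimes> Ga g)"
  using F2_nat G2_nat by metis+

lemma G_counit_right_F: "Z \<in> Ob' \<Longrightarrow> Fa (Ga (eG Z)) \<cdot> Fa (dG Z) = id' (F1 (G1 Z))"
  by (simp flip: F_comp add: G_counit_right)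

lemma G_counit_left_F: "Z \<in> Ob' \<Longrightarrow> Fa (eG (G1 Z)) \<cdot> Fa (dG Z) = id' (F1 (G1 Z))"
  by (simp flip: F_comp add: G_counit_left)

abbreviation (input) "phi_tensor_law \<equiv> \<forall>X\<in>Ob'. \<forall>Y\<in>Ob'.
  \<phi> (X \<odot> Y) \<cdot> (Fa (G2 X Y) \<cdot> F2 (G1 X) (G1 Y)) = Ga (F2 X Y) \<cdot> (G2 (F1 X) (F1 Y) \<cdot> (\<phi> X \<otimes> \<phi> Y))"
abbreviation (input) "phi_unit_law \<equiv> \<phi> I \<cdot> (Fa G0 \<cdot> F0) = Ga F0 \<cdot> G0"

lemma monoidal_dist_law_iff: "monoidal_dist_law M F F2 F0 G G2 G0 \<phi> \<longleftrightarrow> phi_tensor_law \<and> phi_unit_law"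
  unfolding monoidal_dist_law_def by blast

section \<open>Monoidal distributive laws as cells of \<open>Cmd(Cat)\<close> and \<open>CC(Cat)\<close>\<close>

lemma tensor_phi_natural:
  assumes "f \<in> Ar'" "g \<in> Ar'"
  shows "(G2 (F1 (tg f)) (F1 (tg g)) \<cdot> (\<phi> (tg f) \<otimes> \<phi> (tg g))) \<cdot> (Fa (Ga f) \<otimes> Fa (Ga g)) =
         Ga (Fa f \<otimes> Fa g) \<cdot> (G2 (F1 (s f)) (F1 (s g)) \<cdot> (\<phi> (s f) \<otimes> \<phi> (s g)))"
proof -
  have G2_Fa: "Ga (Fa f \<otimes> Fa g) \<cdot> G2 (F1 (s f)) (F1 (s g)) =
      G2 (F1 (tg f)) (F1 (tg g)) \<cdot> (Ga (Fa f) \<otimes> Ga (Fa g))"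
    using G2_nat[of "Fa f" "Fa g"] assms by simp
  show ?thesis using assms by (simp add: tensor_comp phi_nat G2_Fa comp_subst2[OF G2_Fa])
qed

lemma tensor_phi_comult:
  assumes "X \<in> Ob'" "Y \<in> Ob'"
  shows "dG (F1 X \<odot> F1 Y) \<cdot> (G2 (F1 X) (F1 Y) \<cdot> (\<phi> X \<otimes> \<phi> Y)) =
    Ga (G2 (F1 X) (F1 Y) \<cdot> (\<phi> X \<otimes> \<phi> Y)) \<cdot>
      ((G2 (F1 (G1 X)) (F1 (G1 Y)) \<cdot> (\<phi> (G1 X) \<otimes> \<phi> (G1 Y))) \<cdot> (Fa (dG X) \<otimes> Fa (dG Y)))"
proof -
  have dG_G2: "dG (F1 X \<odot> F1 Y) \<cdot> G2 (F1 X) (F1 Y) =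
      Ga (G2 (F1 X) (F1 Y)) \<cdot> (G2 (G1 (F1 X)) (G1 (F1 Y)) \<cdot> (dG (F1 X) \<otimes> dG (F1 Y)))"
    using G2_dG[of "F1 X" "F1 Y"] assms by simp
  have G2_phi: "Ga (\<phi> X \<otimes> \<phi> Y) \<cdot> G2 (F1 (G1 X)) (F1 (G1 Y)) =
      G2 (G1 (F1 X)) (G1 (F1 Y)) \<cdot> (Ga (\<phi> X) \<otimes> Ga (\<phi> Y))"
    using G2_nat[of "\<phi> X" "\<phi> Y"] assms by simp
  show ?thesis
    using assms by (simp add: tensor_comp dG_G2 comp_subst2[OF dG_G2] G2_phi comp_subst2[OF G2_phi]
        phi_comult[symmetric])
qed

lemma tensor_phi_counit:
  assumes "X \<in> Ob'" "Y \<in> Ob'"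
  shows "eG (F1 X \<odot> F1 Y) \<cdot> (G2 (F1 X) (F1 Y) \<cdot> (\<phi> X \<otimes> \<phi> Y)) = Fa (eG X) \<otimes> Fa (eG Y)"
  using assms by (simp add: tensor_comp comp_subst2[OF G2_eG] phi_eG)

lemma phi_tensor_natural:
  assumes "f \<in> Ar'" "g \<in> Ar'"
  shows "(\<phi> (tg f \<odot> tg g) \<cdot> Fa (G2 (tg f) (tg g))) \<cdot> Fa (Ga f \<otimes> Ga g) =
         Ga (Fa (f \<otimes> g)) \<cdot> (\<phi> (s f \<odot> s g) \<cdot> Fa (G2 (s f) (s g)))"
proof -
  have phi: "\<phi> (tg f \<odot> tg g) \<cdot> Fa (Ga (f \<otimes> g)) = Ga (Fa (f \<otimes> g)) \<cdot> \<phi> (s f \<odot> s g)"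
    using phi_nat[of "f \<otimes> g"] assms by simp
  have G2: "Fa (G2 (tg f) (tg g)) \<cdot> Fa (Ga f \<otimes> Ga g) = Fa (Ga (f \<otimes> g)) \<cdot> Fa (G2 (s f) (s g))"
    using F_comp_eq[OF G2_nat[of f g]] assms by simp
  show ?thesis using assms by (simp add: G2 comp_subst2[OF G2] phi comp_subst2[OF phi])
qed

lemma phi_tensor_comult:
  assumes "X \<in> Ob'" "Y \<in> Ob'"
  shows "dG (F1 (X \<odot> Y)) \<cdot> (\<phi> (X \<odot> Y) \<cdot> Fa (G2 X Y)) =
    Ga (\<phi> (X \<odot> Y) \<cdot> Fa (G2 X Y)) \<cdot> ((\<phi> (G1 X \<odot> G1 Y) \<cdot> Fa (G2 (G1 X) (G1 Y))) \<cdot> Fa (dG X \<otimes> dG Y))"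
proof -
  have dG_G2: "Fa (dG (X \<odot> Y)) \<cdot> Fa (G2 X Y) =
      Fa (Ga (G2 X Y)) \<cdot> (Fa (G2 (G1 X) (G1 Y)) \<cdot> Fa (dG X \<otimes> dG Y))"
    using F_comp_eq[OF G2_dG[of X Y, symmetric]] assms by simp
  have phi: "Ga (Fa (G2 X Y)) \<cdot> \<phi> (G1 X \<odot> G1 Y) = \<phi> (G1 (X \<odot> Y)) \<cdot> Fa (Ga (G2 X Y))"
    using phi_nat[of "G2 X Y"] assms by simp
  have dG_phi: "dG (F1 (X \<odot> Y)) \<cdot> \<phi> (X \<odot> Y) = Ga (\<phi> (X \<odot> Y)) \<cdot> (\<phi> (G1 (X \<odot> Y)) \<cdot> Fa (dG (X \<odot> Y)))"
    using phi_comult[of "X \<odot> Y"] assms by simp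
  show ?thesis
    using assms by (simp add: dG_G2 comp_subst2[OF dG_G2] phi comp_subst2[OF phi] dG_phi
        comp_subst2[OF dG_phi])
qed

lemma phi_tensor_counit:
  assumes "X \<in> Ob'" "Y \<in> Ob'"
  shows "eG (F1 (X \<odot> Y)) \<cdot> (\<phi> (X \<odot> Y) \<cdot> Fa (G2 X Y)) = Fa (eG X \<otimes> eG Y)"
proof -
  have "Fa (eG (X \<odot> Y)) \<cdot> Fa (G2 X Y) = Fa (eG X \<otimes> eG Y)"
    using F_comp_eq[OF G2_eG[of X Y]] assms by simp
  then show ?thesis using assms by (simp add: comp_subst2[OF phi_eG])
qed

lemma phi_unit_comult: "dG (F1 I) \<cdot> (\<phi> I \<cdot> Fa G0) = Ga (\<phi> I \<cdot> Fa G0) \<cdot> (\<phi> I \<cdot> Fa G0)"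
proof -
  have dG_G0: "Fa (dG I) \<cdot> Fa G0 = Fa (Ga G0) \<cdot> Fa G0"
    using F_comp_eq[OF G0_dG[symmetric]] by simp
  have phi: "Ga (Fa G0) \<cdot> \<phi> I = \<phi> (G1 I) \<cdot> Fa (Ga G0)"
    using phi_nat[of "G0"] by simp
  show ?thesis
    by (simp add: dG_G0 comp_subst2[OF dG_G0] phi comp_subst2[OF phi] comp_subst2[OF phi_comult[symmetric]])
qed

lemma phi_unit_counit: "eG (F1 I) \<cdot> (\<phi> I \<cdot> Fa G0) = id' (F1 I)"
proof -
  have "Fa (eG I) \<cdot> Fa G0 = id' (F1 I)"
    using F_comp_eq[OF G0_eG] by simp
  then show ?thesis by (simp add: comp_subst2[OF phi_eG])
qed

lemma cmd_1cell_tensor_phi: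
  "cmd_1cell (prod_cat M M) (prod_ftr G G) (prod_nt dG dG) (prod_nt eG eG) M G dG eG
     (fcomp (tens_ftr M) (prod_ftr F F)) (\<lambda>(X, Y). G2 (F1 X) (F1 Y) \<cdot> (\<phi> X \<otimes> \<phi> Y))"
proof (rule cmd_1cell_prod_catI[OF G_comonad G_comonad is_functor_tens_ftr_after[OF F_functor]])
  show "nat_trans (prod_cat M M) M (fcomp (fcomp (tens_ftr M) (prod_ftr F F)) (prod_ftr G G))
     (fcomp G (fcomp (tens_ftr M) (prod_ftr F F))) (\<lambda>(X, Y). G2 (F1 X) (F1 Y) \<cdot> (\<phi> X \<otimes> \<phi> Y))"
    by (rule nat_trans_prod_catI) (use tensor_phi_natural in auto)
qed (use tensor_phi_comult tensor_phi_counit in auto)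

lemma cmd_1cell_phi_tensor:
  "cmd_1cell (prod_cat M M) (prod_ftr G G) (prod_nt dG dG) (prod_nt eG eG) M G dG eG
     (fcomp F (tens_ftr M)) (\<lambda>(X, Y). \<phi> (X \<odot> Y) \<cdot> Fa (G2 X Y))"
proof (rule cmd_1cell_prod_catI[OF G_comonad G_comonad is_functor_tens_ftr_before[OF F_functor]])
  show "nat_trans (prod_cat M M) M (fcomp (fcomp F (tens_ftr M)) (prod_ftr G G))
     (fcomp G (fcomp F (tens_ftr M))) (\<lambda>(X, Y). \<phi> (X \<odot> Y) \<cdot> Fa (G2 X Y))"
    by (rule nat_trans_prod_catI) (use phi_tensor_natural in auto)
qed (use phi_tensor_comult phi_tensor_counit in auto)

lemma cmd_1cell_unit_G0: "cmd_1cell term_cat id_ftr (\<lambda>_. ()) (\<lambda>_. ()) M G dG eG (unit_ftr M) (\<lambda>_. G0)"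
  by (rule cmd_1cell_term_catI[OF G_comonad is_functor_unit_ftr], rule nat_trans_term_catI)
    (auto simp: G0_dG G0_eG)

lemma cmd_1cell_phi_unit:
  "cmd_1cell term_cat id_ftr (\<lambda>_. ()) (\<lambda>_. ()) M G dG eG (fcomp F (unit_ftr M)) (\<lambda>_. \<phi> I \<cdot> Fa G0)"
  by (rule cmd_1cell_term_catI[OF G_comonad is_functor_unit_ftr_before[OF F_functor]],
      rule nat_trans_term_catI) (auto simp: phi_unit_comult phi_unit_counit)

lemma nat_trans_F2:
  "nat_trans (prod_cat M M) M (fcomp (tens_ftr M) (prod_ftr F F)) (fcomp F (tens_ftr M)) (\<lambda>(X, Y). F2 X Y)"
  by (rule nat_trans_prod_catI) (use F2_nat in auto)

lemma nat_trans_F0: "nat_trans term_cat M (unit_ftr M) (fcomp F (unit_ftr M)) (\<lambda>_. F0)"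
  by (rule nat_trans_term_catI) auto

lemma cmd_2cells_iff_monoidal_dist_law:
  "(cmd_2cell (prod_cat M M) (prod_ftr G G) (prod_nt dG dG) (prod_nt eG eG) M G dG eG
      (fcomp (tens_ftr M) (prod_ftr F F)) (\<lambda>(X, Y). G2 (F1 X) (F1 Y) \<cdot> (\<phi> X \<otimes> \<phi> Y))
      (fcomp F (tens_ftr M)) (\<lambda>(X, Y). \<phi> (X \<odot> Y) \<cdot> Fa (G2 X Y))
      (\<lambda>(X, Y). F2 X Y) \<and>
    cmd_2cell term_cat id_ftr (\<lambda>_. ()) (\<lambda>_. ()) M G dG eG
      (unit_ftr M) (\<lambda>_. G0) (fcomp F (unit_ftr M)) (\<lambda>_. \<phi> I \<cdot> Fa G0) (\<lambda>_. F0))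
   \<longleftrightarrow> monoidal_dist_law M F F2 F0 G G2 G0 \<phi>"
  unfolding cmd_2cell_def monoidal_dist_law_def
  using cmd_1cell_tensor_phi cmd_1cell_phi_tensor nat_trans_F2 cmd_1cell_unit_G0 cmd_1cell_phi_unit
    nat_trans_F0
  by auto

lemma cc_1cells_iff_monoidal_dist_law:
  "(cc_1cell (prod_cat M M) (prod_ftr F F) (prod_nt DF DF) (prod_nt eF eF)
      (prod_ftr G G) (prod_nt dG dG) (prod_nt eG eG) (prod_nt \<phi> \<phi>) M F DF eF G dG eG \<phi>
      (tens_ftr M) (\<lambda>(X, Y). F2 X Y) (\<lambda>(X, Y). G2 X Y) \<and>
    cc_1cell term_cat id_ftr (\<lambda>_. ()) (\<lambda>_. ()) id_ftr (\<lambda>_. ()) (\<lambda>_. ()) (\<lambda>_. ()) M F DF eF G dG eG \<phi>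
      (unit_ftr M) (\<lambda>_. F0) (\<lambda>_. G0))
   \<longleftrightarrow> monoidal_dist_law M F F2 F0 G G2 G0 \<phi>"
proof -
  have "cc_0cell (prod_cat M M) (prod_ftr F F) (prod_nt DF DF) (prod_nt eF eF)
      (prod_ftr G G) (prod_nt dG dG) (prod_nt eG eG) (prod_nt \<phi> \<phi>)"
    unfolding cc_0cell_def
    using comonad_prod_cat[OF F_comonad] comonad_prod_cat[OF G_comonad] dist_law_prod_cat[OF dist_law]
    by blast
  moreover have "cc_0cell M F DF eF G dG eG \<phi>"
    unfolding cc_0cell_def using F_comonad G_comonad dist_law by blast
  moreover have "cc_0cell term_cat id_ftr (\<lambda>_. ()) (\<lambda>_. ()) id_ftr (\<lambda>_. ()) (\<lambda>_. ()) (\<lambda>_. ())"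
    unfolding cc_0cell_def using comonad_term_cat dist_law_term_cat by blast
  ultimately show ?thesis
    unfolding cc_1cell_def monoidal_dist_law_def
    using bicomonad_tensor_cmd_1cell[OF F_bicomonad] bicomonad_tensor_cmd_1cell[OF G_bicomonad]
      bicomonad_unit_cmd_1cell[OF F_bicomonad] bicomonad_unit_cmd_1cell[OF G_bicomonad]
    by (auto simp: eq_commute)
qed

section \<open>The smash coproduct\<close>

abbreviation (input) "SC \<equiv> smash_comult M F DF G dG \<phi>"
abbreviation (input) "SE \<equiv> smash_counit M eF G eG"
abbreviation (input) "S2 \<equiv> smash_F2 M F F2 G G2"
abbreviation (input) "S0 \<equiv> smash_F0 M F F0 G0"

text \<open>The \<open>G\<close>-coaction \<open>\<phi>\<^sub>G\<^sub>X \<circ> F \<delta>\<^sub>X\<close> of the cofree bicomodule \<open>F G X\<close>.\<close>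

abbreviation (input) "cofree_G X \<equiv> \<phi> (G1 X) \<cdot> Fa (dG X)"

lemma SC_eq: "SC X = Fa (\<phi> (G1 X)) \<cdot> (Fa (Fa (dG X)) \<cdot> DF (G1 X))"
  unfolding smash_comult_def by simp

lemma SE_eq: "SE X = eG X \<cdot> eF (G1 X)"
  unfolding smash_counit_def by simp

lemma S2_eq: "S2 X Y = Fa (G2 X Y) \<cdot> F2 (G1 X) (G1 Y)"
  unfolding smash_F2_def by simp

lemma S0_eq: "S0 = Fa G0 \<cdot> F0"
  unfolding smash_F0_def by simp

lemma SC_simps [simp]:
  "X \<in> Ob' \<Longrightarrow> SC X \<in> Ar'" "X \<in> Ob' \<Longrightarrow> s (SC X) = F1 (G1 X)"
  "X \<in> Ob' \<Longrightarrow> tg (SC X) = F1 (G1 (F1 (G1 X)))"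
  unfolding SC_eq by simp_all

lemma SE_simps [simp]:
  "X \<in> Ob' \<Longrightarrow> SE X \<in> Ar'" "X \<in> Ob' \<Longrightarrow> s (SE X) = F1 (G1 X)" "X \<in> Ob' \<Longrightarrow> tg (SE X) = X"
  unfolding SE_eq by simp_all

lemma SC_natural:
  assumes "f \<in> Ar'"
  shows "SC (tg f) \<cdot> Fa (Ga f) = Fa (Ga (Fa (Ga f))) \<cdot> SC (s f)"
proof -
  have dG: "Fa (Fa (dG (tg f))) \<cdot> Fa (Fa (Ga f)) = Fa (Fa (Ga (Ga f))) \<cdot> Fa (Fa (dG (s f)))"
    using assms by (simp flip: F_comp add: dG_natL)
  have phi: "Fa (\<phi> (G1 (tg f))) \<cdot> Fa (Fa (Ga (Ga f))) = Fa (Ga (Fa (Ga f))) \<cdot> Fa (\<phi> (G1 (s f)))"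
    using assms by (simp flip: F_comp add: phi_natL)
  show ?thesis unfolding SC_eq using assms
    by (simp add: DF_natL comp_subst2[OF DF_natL] dG comp_subst2[OF dG] phi comp_subst2[OF phi])
qed

lemma SE_natural:
  assumes "f \<in> Ar'"
  shows "SE (tg f) \<cdot> Fa (Ga f) = f \<cdot> SE (s f)"
  unfolding SE_eq using assms by (simp add: eF_natL comp_subst2[OF eF_natL] eG_natL comp_subst2[OF eG_natL])

lemma cofree_G_coassoc:
  assumes X: "X \<in> Ob'"
  shows "dG (F1 (G1 X)) \<cdot> cofree_G X = Ga (\<phi> (G1 X)) \<cdot> (Ga (Fa (dG X)) \<cdot> cofree_G X)"
proof -
  have "Fa (dG (G1 X)) \<cdot> Fa (dG X) = Fa (Ga (dG X)) \<cdot> Fa (dG X)"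
    using X by (simp flip: F_comp add: G_coassoc)
  then show ?thesis
    using X by (simp add: comp_subst2[OF phi_comult[symmetric]] phi_natL comp_subst2[OF phi_natL])
qed

lemma SC_coassoc:
  assumes X: "X \<in> Ob'"
  shows "SC (F1 (G1 X)) \<cdot> SC X = Fa (Ga (SC X)) \<cdot> SC X"
proof -
  have coassoc_F: "Fa (dG (F1 (G1 X))) \<cdot> (Fa (\<phi> (G1 X)) \<cdot> Fa (Fa (dG X))) =
      Fa (Ga (\<phi> (G1 X))) \<cdot> (Fa (Ga (Fa (dG X))) \<cdot> (Fa (\<phi> (G1 X)) \<cdot> Fa (Fa (dG X))))"
    using X by (simp flip: F_comp add: cofree_G_coassoc)
  have core: "\<phi> (G1 (F1 (G1 X))) \<cdot> (Fa (dG (F1 (G1 X))) \<cdot> (Fa (\<phi> (G1 X)) \<cdot> (Fa (Fa (dG X)) \<cdot> DF (G1 X)))) =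
      Ga (Fa (\<phi> (G1 X))) \<cdot> (Ga (Fa (Fa (dG X))) \<cdot> (Ga (DF (G1 X)) \<cdot> cofree_G X))"
    using X by (simp add: comp_subst3[OF coassoc_F] comp_subst2[OF phi_DF[symmetric]] DF_natL phi_natR
        comp_subst2[OF phi_natR])
  have "SC (F1 (G1 X)) \<cdot> SC X = Fa (\<phi> (G1 (F1 (G1 X))) \<cdot>
      (Fa (dG (F1 (G1 X))) \<cdot> (Fa (\<phi> (G1 X)) \<cdot> (Fa (Fa (dG X)) \<cdot> DF (G1 X))))) \<cdot> DF (G1 X)"
    unfolding SC_eq using X by (simp add: DF_natL comp_subst2[OF DF_natL] F_coassoc)
  also have "\<dots> = Fa (Ga (Fa (\<phi> (G1 X))) \<cdot> (Ga (Fa (Fa (dG X))) \<cdot> (Ga (DF (G1 X)) \<cdot> cofree_G X))) \<cdot>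
      DF (G1 X)"
    by (simp only: core)
  also have "\<dots> = Fa (Ga (SC X)) \<cdot> SC X"
    unfolding SC_eq using X by simp
  finally show ?thesis .
qed

lemma SC_counit_left:
  assumes X: "X \<in> Ob'"
  shows "SE (F1 (G1 X)) \<cdot> SC X = id' (F1 (G1 X))"
  unfolding SC_eq SE_eq using X G_counit_left_F[OF X]
  by (simp add: eF_natL comp_subst2[OF eF_natL] F_counit_left comp_subst2[OF phi_eG])

lemma SC_counit_right:
  assumes X: "X \<in> Ob'"
  shows "Fa (Ga (SE X)) \<cdot> SC X = id' (F1 (G1 X))"
proof -
  have phi: "Fa (Ga (eF (G1 X))) \<cdot> Fa (\<phi> (G1 X)) = Fa (eF (G1 (G1 X)))"
    using X by (simp flip: F_comp add: phi_eF)
  have eF: "Fa (eF (G1 (G1 X))) \<cdot> Fa (Fa (dG X)) = Fa (dG X) \<cdot> Fa (eF (G1 X))"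
    using X by (simp flip: F_comp add: eF_natL)
  show ?thesis unfolding SC_eq SE_eq using X G_counit_right_F[OF X]
    by (simp add: comp_subst2[OF phi] comp_subst2[OF eF] F_counit_right comp_subst2[OF F_counit_right])
qed

lemma smash_comonad: "comonad M (fcomp F G) SC SE"
  unfolding comonad_def
proof (intro conjI ballI)
  show "is_functor M M (fcomp F G)" by (rule is_functor_fcomp[OF F_functor G_functor])
  show "nat_trans M M (fcomp F G) (fcomp (fcomp F G) (fcomp F G)) SC"
    unfolding nat_trans_def hom_iff using SC_natural by simp
  show "nat_trans M M (fcomp F G) id_ftr SE"
    unfolding nat_trans_def hom_iff using SE_natural by simp
qed (simp_all add: SC_coassoc SC_counit_left SC_counit_right)

lemma smash_monoidal_functor: "monoidal_functor M (fcomp F G) S2 S0"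
proof -
  have "S2 = (\<lambda>X Y. Fa (G2 X Y) \<cdot> F2 (G1 X) (G1 Y))" by (intro ext) (simp add: S2_eq)
  then show ?thesis using monoidal_functor_fcomp[OF F_monoidal G_monoidal] by (simp add: S0_eq)
qed

lemma SE_S2:
  assumes X: "X \<in> Ob'" and Y: "Y \<in> Ob'"
  shows "SE (X \<odot> Y) \<cdot> S2 X Y = SE X \<otimes> SE Y"
  unfolding SE_eq S2_eq using X Y
  by (simp add: eF_natL comp_subst2[OF eF_natL] F2_eF comp_subst2[OF G2_eG] tensor_comp)

lemma SE_S0: "SE I \<cdot> S0 = id' I"
  unfolding SE_eq S0_eq by (simp add: eF_natL comp_subst2[OF eF_natL] F0_eF comp_subst2[OF G0_eG] G0_eG)

lemma SC_S2_of_phi_tensor_law: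
  assumes X: "X \<in> Ob'" and Y: "Y \<in> Ob'" and law: phi_tensor_law
  shows "Fa (Ga (S2 X Y)) \<cdot> (S2 (F1 (G1 X)) (F1 (G1 Y)) \<cdot> (SC X \<otimes> SC Y)) = SC (X \<odot> Y) \<cdot> S2 X Y"
proof -
  have dG_G2: "Fa (Fa (dG (X \<odot> Y))) \<cdot> Fa (Fa (G2 X Y)) =
      Fa (Fa (Ga (G2 X Y))) \<cdot> (Fa (Fa (G2 (G1 X) (G1 Y))) \<cdot> Fa (Fa (dG X \<otimes> dG Y)))"
    using X Y by (simp flip: F_comp add: G2_dG[symmetric])
  have F2_dG: "Fa (Fa (dG X \<otimes> dG Y)) \<cdot> Fa (F2 (G1 X) (G1 Y)) =
      Fa (F2 (G1 (G1 X)) (G1 (G1 Y))) \<cdot> Fa (Fa (dG X) \<otimes> Fa (dG Y))"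
    using X Y by (simp flip: F_comp add: F2_natR)
  have phi_G2: "Fa (\<phi> (G1 (X \<odot> Y))) \<cdot> Fa (Fa (Ga (G2 X Y))) =
      Fa (Ga (Fa (G2 X Y))) \<cdot> Fa (\<phi> (G1 X \<odot> G1 Y))"
    using X Y by (simp flip: F_comp add: phi_natR)
  have "\<phi> (G1 X \<odot> G1 Y) \<cdot> (Fa (G2 (G1 X) (G1 Y)) \<cdot> F2 (G1 (G1 X)) (G1 (G1 Y))) =
      Ga (F2 (G1 X) (G1 Y)) \<cdot> (G2 (F1 (G1 X)) (F1 (G1 Y)) \<cdot> (\<phi> (G1 X) \<otimes> \<phi> (G1 Y)))"
    using law X Y by simp
  then have law_F: "Fa (\<phi> (G1 X \<odot> G1 Y)) \<cdot> (Fa (Fa (G2 (G1 X) (G1 Y))) \<cdot> Fa (F2 (G1 (G1 X)) (G1 (G1 Y)))) =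
      Fa (Ga (F2 (G1 X) (G1 Y))) \<cdot> (Fa (G2 (F1 (G1 X)) (F1 (G1 Y))) \<cdot> Fa (\<phi> (G1 X) \<otimes> \<phi> (G1 Y)))"
    using X Y by (simp flip: F_comp)
  show ?thesis unfolding SC_eq S2_eq using X Y
    by (simp add: comp_subst2[OF DF_natL] F2_DF[symmetric] comp_subst2[OF F2_DF[symmetric]]
        dG_G2 comp_subst2[OF dG_G2] F2_dG comp_subst2[OF F2_dG] phi_G2 comp_subst2[OF phi_G2]
        comp_subst3[OF law_F] F2_natR comp_subst2[OF F2_natR] tensor_comp comp_subst2[OF tensor_comp])
qed

text \<open>The projection \<open>G F \<epsilon>\<^sub>Z \<circ> \<epsilon>\<^sub>G\<^sub>F\<^sub>G\<^sub>Z\<close> recovers \<open>\<phi>\<close> from the smash comultiplication; this is how the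
  compatibility of \<open>SC\<close> with the monoidal structure gives back the monoidality of \<open>\<phi>\<close>.\<close>

lemma projection_SC:
  assumes Z: "Z \<in> Ob'"
  shows "Ga (Fa (eG Z)) \<cdot> (eF (G1 (F1 (G1 Z))) \<cdot> SC Z) = \<phi> Z"
  unfolding SC_eq using Z
  by (simp add: eF_natL comp_subst2[OF eF_natL] F_counit_left comp_subst2[OF phi_natR] G_counit_right_F)

lemma phi_tensor_law_of_SC_S2:
  assumes X: "X \<in> Ob'" and Y: "Y \<in> Ob'"
    and SC_S2: "Fa (Ga (S2 X Y)) \<cdot> (S2 (F1 (G1 X)) (F1 (G1 Y)) \<cdot> (SC X \<otimes> SC Y)) = SC (X \<odot> Y) \<cdot> S2 X Y"
  shows "\<phi> (X \<odot> Y) \<cdot> (Fa (G2 X Y) \<cdot> F2 (G1 X) (G1 Y)) = Ga (F2 X Y) \<cdot> (G2 (F1 X) (F1 Y) \<cdot> (\<phi> X \<otimes> \<phi> Y))"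
proof -
  let ?p = "Ga (Fa (eG (X \<odot> Y))) \<cdot> eF (G1 (F1 (G1 (X \<odot> Y))))"
  have eG_G2: "Ga (Fa (eG (X \<odot> Y))) \<cdot> Ga (Fa (G2 X Y)) = Ga (Fa (eG X \<otimes> eG Y))"
    using X Y by (simp flip: F_comp G_comp add: G2_eG)
  have F2_eG: "Ga (Fa (eG X \<otimes> eG Y)) \<cdot> Ga (F2 (G1 X) (G1 Y)) = Ga (F2 X Y) \<cdot> Ga (Fa (eG X) \<otimes> Fa (eG Y))"
    using X Y by (simp flip: G_comp add: F2_natR)
  have "\<phi> (X \<odot> Y) \<cdot> (Fa (G2 X Y) \<cdot> F2 (G1 X) (G1 Y)) = ?p \<cdot> (SC (X \<odot> Y) \<cdot> S2 X Y)"
    using X Y comp_subst2[OF projection_SC, of "X \<odot> Y" "S2 X Y"] unfolding S2_eq by simp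
  also have "\<dots> = ?p \<cdot> (Fa (Ga (S2 X Y)) \<cdot> (S2 (F1 (G1 X)) (F1 (G1 Y)) \<cdot> (SC X \<otimes> SC Y)))"
    by (simp only: SC_S2)
  also have "\<dots> = Ga (F2 X Y) \<cdot> (G2 (F1 X) (F1 Y) \<cdot> (\<phi> X \<otimes> \<phi> Y))"
    unfolding S2_eq using X Y
    by (simp add: eF_natL comp_subst2[OF eF_natL] comp_subst2[OF F2_eF] tensor_comp
        comp_subst2[OF tensor_comp] eG_G2 comp_subst2[OF eG_G2] F2_eG comp_subst2[OF F2_eG]
        G2_natR comp_subst2[OF G2_natR] projection_SC)
  finally show ?thesis .
qed

lemma SC_S0_of_phi_unit_law:
  assumes law: phi_unit_law
  shows "Fa (Ga S0) \<cdot> S0 = SC I \<cdot> S0"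
proof -
  have dG_G0: "Fa (Fa (dG I)) \<cdot> Fa (Fa G0) = Fa (Fa (Ga G0)) \<cdot> Fa (Fa G0)"
    by (simp flip: F_comp add: G0_dG)
  have phi_G0: "Fa (\<phi> (G1 I)) \<cdot> Fa (Fa (Ga G0)) = Fa (Ga (Fa G0)) \<cdot> Fa (\<phi> I)"
    by (simp flip: F_comp add: phi_natR)
  have law_F: "Fa (\<phi> I) \<cdot> (Fa (Fa G0) \<cdot> Fa F0) = Fa (Ga F0) \<cdot> Fa G0"
    by (simp flip: F_comp add: law)
  show ?thesis unfolding SC_eq S0_eq
    by (simp add: comp_subst2[OF DF_natL] F0_DF[symmetric] comp_subst2[OF dG_G0] comp_subst2[OF phi_G0]
        law_F comp_subst3[OF law_F])
qed

lemma phi_unit_law_of_SC_S0: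
  assumes SC_S0: "Fa (Ga S0) \<cdot> S0 = SC I \<cdot> S0"
  shows phi_unit_law
proof -
  let ?p = "Ga (Fa (eG I)) \<cdot> eF (G1 (F1 (G1 I)))"
  have eG_G0: "Ga (Fa (eG I)) \<cdot> Ga (Fa G0) = id' (G1 (F1 I))"
    by (simp flip: F_comp G_comp add: G0_eG)
  have "\<phi> I \<cdot> (Fa G0 \<cdot> F0) = ?p \<cdot> (SC I \<cdot> S0)"
    using comp_subst2[OF projection_SC, of I S0] unfolding S0_eq by simp
  also have "\<dots> = ?p \<cdot> (Fa (Ga S0) \<cdot> S0)" by (simp only: SC_S0)
  also have "\<dots> = Ga F0 \<cdot> G0"
    unfolding S0_eq by (simp add: eF_natL comp_subst2[OF eF_natL] F0_eF comp_subst2[OF eG_G0])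
  finally show ?thesis .
qed

lemma smash_bicomonad_iff_monoidal_dist_law:
  "bicomonad M (fcomp F G) SC SE S2 S0 \<longleftrightarrow> monoidal_dist_law M F F2 F0 G G2 G0 \<phi>"
proof -
  have "bicomonad M (fcomp F G) SC SE S2 S0 \<longleftrightarrow>
      (\<forall>X\<in>Ob'. \<forall>Y\<in>Ob'. Fa (Ga (S2 X Y)) \<cdot> (S2 (F1 (G1 X)) (F1 (G1 Y)) \<cdot> (SC X \<otimes> SC Y)) =
         SC (X \<odot> Y) \<cdot> S2 X Y) \<and> Fa (Ga S0) \<cdot> S0 = SC I \<cdot> S0"
    unfolding bicomonad_def using smash_comonad smash_monoidal_functor SE_S2 SE_S0 by simp
  also have "\<dots> \<longleftrightarrow> phi_tensor_law \<and> phi_unit_law"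
    using SC_S2_of_phi_tensor_law phi_tensor_law_of_SC_S2 SC_S0_of_phi_unit_law phi_unit_law_of_SC_S0
    by blast
  finally show ?thesis by (simp only: monoidal_dist_law_iff)
qed

section \<open>The category of bicomodules\<close>

abbreviation (input) "BC \<equiv> bicomod_moncat M F DF eF F2 F0 G dG eG G2 G0 \<phi>"
abbreviation (input) "bcm \<equiv> is_bicomod M F DF eF G dG eG \<phi>"
abbreviation (input) "bmor \<equiv> is_bicomod_mor M F G"
abbreviation (input) "TT \<equiv> bc_tns M F2 G2"

lemma bicomod_moncat_simps [simp]:
  "Ob BC = {A. bcm A}"
  "Ar BC = {(A, f, B). bcm A \<and> bcm B \<and> bmor A f B}"
  "src BC = fst" "tgt BC = (\<lambda>t. snd (snd t))"
  "cmp BC g f = (fst f, fst (snd g) \<cdot> fst (snd f), snd (snd g))"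
  "idn BC A = (A, id' (fst A), A)"
  "tns BC = TT"
  "tnsa BC f g = (TT (fst f) (fst g), fst (snd f) \<otimes> fst (snd g), TT (snd (snd f)) (snd (snd g)))"
  "munit BC = (I, F0, G0)"
  "asc BC A B C = (TT (TT A B) C, asc M (fst A) (fst B) (fst C), TT A (TT B C))"
  "lu BC A = (TT (I, F0, G0) A, lu M (fst A), A)"
  "ru BC A = (TT A (I, F0, G0), ru M (fst A), A)"
  unfolding bicomod_moncat_def Let_def by simp_all

lemma bc_tns_simp [simp]:
  "TT (X, \<theta>, \<rho>) (Y, \<theta>', \<rho>') = (X \<odot> Y, F2 X Y \<cdot> (\<theta> \<otimes> \<theta>'), G2 X Y \<cdot> (\<rho> \<otimes> \<rho>'))"
  unfolding bc_tns_def by simp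

lemma is_bicomod_comodules:
  "bcm (X, \<theta>, \<rho>) \<longleftrightarrow> is_comodule M F DF eF X \<theta> \<and> is_comodule M G dG eG X \<rho> \<and>
     \<phi> X \<cdot> (Fa \<rho> \<cdot> \<theta>) = Ga \<theta> \<cdot> \<rho>"
  unfolding is_bicomod_def is_comodule_def by auto

lemma is_bicomod_iff:
  "bcm (X, \<theta>, \<rho>) \<longleftrightarrow> X \<in> Ob' \<and> \<theta> \<in> Ar' \<and> s \<theta> = X \<and> tg \<theta> = F1 X \<and> \<rho> \<in> Ar' \<and> s \<rho> = X \<and>
     tg \<rho> = G1 X \<and> DF X \<cdot> \<theta> = Fa \<theta> \<cdot> \<theta> \<and> eF X \<cdot> \<theta> = id' X \<and> dG X \<cdot> \<rho> = Ga \<rho> \<cdot> \<rho> \<and>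
     eG X \<cdot> \<rho> = id' X \<and> \<phi> X \<cdot> (Fa \<rho> \<cdot> \<theta>) = Ga \<theta> \<cdot> \<rho>"
  unfolding is_bicomod_def hom_iff by auto

lemma is_bicomod_mor_iff:
  "bmor (X, \<theta>, \<rho>) f (Y, \<theta>', \<rho>') \<longleftrightarrow>
     f \<in> Ar' \<and> s f = X \<and> tg f = Y \<and> \<theta>' \<cdot> f = Fa f \<cdot> \<theta> \<and> \<rho>' \<cdot> f = Ga f \<cdot> \<rho>"
  unfolding is_bicomod_mor_def hom_iff by auto

lemma is_bicomod_Ob: "bcm (X, \<theta>, \<rho>) \<Longrightarrow> X \<in> Ob'"
  unfolding is_bicomod_def by simp

lemma ball_Ob_bicomod_moncat:
  "(\<forall>A\<in>Ob BC. P A) \<longleftrightarrow> (\<forall>X \<theta> \<rho>. bcm (X, \<theta>, \<rho>) \<longrightarrow> P (X, \<theta>, \<rho>))"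
  by auto

lemma ball_Ar_bicomod_moncat:
  "(\<forall>x\<in>Ar BC. P x) \<longleftrightarrow> (\<forall>X \<theta> \<rho> f Y \<theta>' \<rho>'. bcm (X, \<theta>, \<rho>) \<and> bcm (Y, \<theta>', \<rho>') \<and>
     bmor (X, \<theta>, \<rho>) f (Y, \<theta>', \<rho>') \<longrightarrow> P ((X, \<theta>, \<rho>), f, (Y, \<theta>', \<rho>')))"
  by force

lemma bicomod_mor_comp:
  assumes "bmor (X, \<theta>, \<rho>) f (Y, \<theta>', \<rho>')" "bmor (Y, \<theta>', \<rho>') g (Z, \<theta>'', \<rho>'')"
    and "bcm (X, \<theta>, \<rho>)" "bcm (Y, \<theta>', \<rho>')" "bcm (Z, \<theta>'', \<rho>'')"
  shows "bmor (X, \<theta>, \<rho>) (g \<cdot> f) (Z, \<theta>'', \<rho>'')"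
proof -
  note data = assms[unfolded is_bicomod_iff is_bicomod_mor_iff]
  have g: "\<theta>'' \<cdot> g = Fa g \<cdot> \<theta>'" "\<rho>'' \<cdot> g = Ga g \<cdot> \<rho>'" using data by simp_all
  have f: "\<theta>' \<cdot> f = Fa f \<cdot> \<theta>" "\<rho>' \<cdot> f = Ga f \<cdot> \<rho>" using data by simp_all
  show ?thesis unfolding is_bicomod_mor_iff using data
    by (simp add: comp_subst2[OF g(1)] comp_subst2[OF g(2)] comp_subst2[OF f(1)] comp_subst2[OF f(2)] f)
qed

lemma is_category_bicomod_moncat: "is_category BC"
  unfolding is_category_def
proof (intro conjI)
  show "\<forall>X\<in>Ob BC. idn BC X \<in> hom BC X X"
    by (auto simp: ball_Ob_bicomod_moncat hom_iff is_bicomod_iff is_bicomod_mor_iff)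
  show "\<forall>f\<in>Ar BC. \<forall>g\<in>Ar BC. tgt BC f = src BC g \<longrightarrow> cmp BC g f \<in> hom BC (src BC f) (tgt BC g)"
    by (auto simp: ball_Ar_bicomod_moncat hom_iff intro: bicomod_mor_comp)
qed (auto simp: ball_Ar_bicomod_moncat is_bicomod_mor_iff)

lemma bicomod_mor_inverse:
  assumes "bcm (X, \<theta>, \<rho>)" "bcm (Y, \<theta>', \<rho>')" "bmor (X, \<theta>, \<rho>) f (Y, \<theta>', \<rho>')"
    and g: "g \<in> Ar'" "s g = Y" "tg g = X" "g \<cdot> f = id' X" "f \<cdot> g = id' Y"
  shows "bmor (Y, \<theta>', \<rho>') g (X, \<theta>, \<rho>)"
proof -
  note data = assms[unfolded is_bicomod_iff is_bicomod_mor_iff]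
  have "\<theta> \<cdot> g = Fa g \<cdot> \<theta>'" by (rule coaction_inverse[OF F_functor]) (use data in auto)
  moreover have "\<rho> \<cdot> g = Ga g \<cdot> \<rho>'" by (rule coaction_inverse[OF G_functor]) (use data in auto)
  ultimately show ?thesis unfolding is_bicomod_mor_iff using g by simp
qed

lemma is_iso_bicomod_moncat:
  assumes A: "bcm A" and B: "bcm B" and m: "bmor A f B" and iso: "is_iso M f"
  shows "is_iso BC (A, f, B)"
proof -
  obtain X \<theta> \<rho> Y \<theta>' \<rho>' where AB: "A = (X, \<theta>, \<rho>)" "B = (Y, \<theta>', \<rho>')" by (cases A, cases B) auto
  have f: "s f = X" "tg f = Y" using m unfolding AB is_bicomod_mor_iff by simp_all
  obtain g where g: "g \<in> Ar'" "s g = Y" "tg g = X" "g \<cdot> f = id' X" "f \<cdot> g = id' Y"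
    using iso_inverse[OF iso] f by auto
  have "bmor B g A" using bicomod_mor_inverse[OF A[unfolded AB] B[unfolded AB] m[unfolded AB] g] AB by simp
  then show ?thesis unfolding is_iso_def hom_iff
    using A B m g f AB by (auto intro!: bexI[of _ "(B, g, A)"] simp: hom_iff)
qed

lemma bicomod_compat_tensor:
  assumes law: phi_tensor_law and "bcm (X, \<theta>, \<rho>)" "bcm (Y, \<theta>', \<rho>')"
  shows "\<phi> (X \<odot> Y) \<cdot> (Fa (G2 X Y \<cdot> (\<rho> \<otimes> \<rho>')) \<cdot> (F2 X Y \<cdot> (\<theta> \<otimes> \<theta>'))) =
         Ga (F2 X Y \<cdot> (\<theta> \<otimes> \<theta>')) \<cdot> (G2 X Y \<cdot> (\<rho> \<otimes> \<rho>'))"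
proof -
  note X = assms(2)[unfolded is_bicomod_iff] and Y = assms(3)[unfolded is_bicomod_iff]
  have F2_rho: "Fa (\<rho> \<otimes> \<rho>') \<cdot> F2 X Y = F2 (G1 X) (G1 Y) \<cdot> (Fa \<rho> \<otimes> Fa \<rho>')"
    using F2_nat[of \<rho> \<rho>'] X Y by simp
  have G2_theta: "G2 (F1 X) (F1 Y) \<cdot> (Ga \<theta> \<otimes> Ga \<theta>') = Ga (\<theta> \<otimes> \<theta>') \<cdot> G2 X Y"
    using G2_nat[of \<theta> \<theta>'] X Y by simp
  have "\<phi> (X \<odot> Y) \<cdot> (Fa (G2 X Y \<cdot> (\<rho> \<otimes> \<rho>')) \<cdot> (F2 X Y \<cdot> (\<theta> \<otimes> \<theta>'))) =
        \<phi> (X \<odot> Y) \<cdot> (Fa (G2 X Y) \<cdot> (F2 (G1 X) (G1 Y) \<cdot> ((Fa \<rho> \<otimes> Fa \<rho>') \<cdot> (\<theta> \<otimes> \<theta>'))))"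
    using X Y by (simp add: comp_subst2[OF F2_rho])
  also have "\<dots> = Ga (F2 X Y) \<cdot> (G2 (F1 X) (F1 Y) \<cdot> ((\<phi> X \<otimes> \<phi> Y) \<cdot> ((Fa \<rho> \<otimes> Fa \<rho>') \<cdot> (\<theta> \<otimes> \<theta>'))))"
    using X Y by (simp add: comp_subst3[OF law[rule_format]])
  also have "\<dots> = Ga (F2 X Y) \<cdot> (G2 (F1 X) (F1 Y) \<cdot> ((\<phi> X \<cdot> (Fa \<rho> \<cdot> \<theta>)) \<otimes> (\<phi> Y \<cdot> (Fa \<rho>' \<cdot> \<theta>'))))"
    using X Y by (simp add: tensor_comp3)
  also have "\<dots> = Ga (F2 X Y) \<cdot> (G2 (F1 X) (F1 Y) \<cdot> ((Ga \<theta> \<otimes> Ga \<theta>') \<cdot> (\<rho> \<otimes> \<rho>')))"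
    using X Y by (simp add: tensor_comp)
  also have "\<dots> = Ga (F2 X Y) \<cdot> (Ga (\<theta> \<otimes> \<theta>') \<cdot> (G2 X Y \<cdot> (\<rho> \<otimes> \<rho>')))"
    using X Y by (simp add: comp_subst2[OF G2_theta])
  finally show ?thesis using X Y by simp
qed

lemma bicomod_tensor:
  assumes law: phi_tensor_law and A: "bcm A" and B: "bcm B"
  shows "bcm (TT A B)"
proof -
  obtain X \<theta> \<rho> Y \<theta>' \<rho>' where AB: "A = (X, \<theta>, \<rho>)" "B = (Y, \<theta>', \<rho>')" by (cases A, cases B) auto
  have "is_comodule M F DF eF X \<theta>" "is_comodule M G dG eG X \<rho>"
    "is_comodule M F DF eF Y \<theta>'" "is_comodule M G dG eG Y \<rho>'"
    using A B unfolding AB is_bicomod_comodules by simp_all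
  then show ?thesis
    using bicomod_compat_tensor[OF law A[unfolded AB] B[unfolded AB]]
      comodule_tensor[OF F_bicomonad] comodule_tensor[OF G_bicomonad]
    unfolding AB bc_tns_simp is_bicomod_comodules by simp
qed

lemma bicomod_unit: "phi_unit_law \<Longrightarrow> bcm (I, F0, G0)"
  unfolding is_bicomod_comodules using comodule_unit[OF F_bicomonad] comodule_unit[OF G_bicomonad] by simp

lemma bicomod_mor_tensor:
  assumes "bcm (X, \<theta>, \<rho>)" "bcm (Y, \<theta>', \<rho>')" "bcm (X2, \<theta>2, \<rho>2)" "bcm (Y2, \<theta>2', \<rho>2')"
    and "bmor (X, \<theta>, \<rho>) f (X2, \<theta>2, \<rho>2)" "bmor (Y, \<theta>', \<rho>') g (Y2, \<theta>2', \<rho>2')"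
  shows "bmor (TT (X, \<theta>, \<rho>) (Y, \<theta>', \<rho>')) (f \<otimes> g) (TT (X2, \<theta>2, \<rho>2) (Y2, \<theta>2', \<rho>2'))"
proof -
  note data = assms[unfolded is_bicomod_iff is_bicomod_mor_iff]
  have "(F2 X2 Y2 \<cdot> (\<theta>2 \<otimes> \<theta>2')) \<cdot> (f \<otimes> g) = Fa (f \<otimes> g) \<cdot> (F2 X Y \<cdot> (\<theta> \<otimes> \<theta>'))"
    by (rule coaction_tensor_natural[OF F_monoidal]) (use data in auto)
  moreover have "(G2 X2 Y2 \<cdot> (\<rho>2 \<otimes> \<rho>2')) \<cdot> (f \<otimes> g) = Ga (f \<otimes> g) \<cdot> (G2 X Y \<cdot> (\<rho> \<otimes> \<rho>'))"
    by (rule coaction_tensor_natural[OF G_monoidal]) (use data in auto)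
  ultimately show ?thesis unfolding bc_tns_simp is_bicomod_mor_iff using data by simp
qed

lemma bicomod_mor_asc:
  assumes "bcm (X, \<theta>, \<rho>)" "bcm (Y, \<theta>', \<rho>')" "bcm (Z, \<theta>'', \<rho>'')"
  shows "bmor (TT (TT (X, \<theta>, \<rho>) (Y, \<theta>', \<rho>')) (Z, \<theta>'', \<rho>'')) (asc M X Y Z)
    (TT (X, \<theta>, \<rho>) (TT (Y, \<theta>', \<rho>') (Z, \<theta>'', \<rho>'')))"
proof -
  note data = assms[unfolded is_bicomod_iff]
  have "(F2 X (Y \<odot> Z) \<cdot> (\<theta> \<otimes> (F2 Y Z \<cdot> (\<theta>' \<otimes> \<theta>'')))) \<cdot> asc M X Y Z =
      Fa (asc M X Y Z) \<cdot> (F2 (X \<odot> Y) Z \<cdot> ((F2 X Y \<cdot> (\<theta> \<otimes> \<theta>')) \<otimes> \<theta>''))"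
    by (rule coaction_asc[OF F_monoidal]) (use data in auto)
  moreover have "(G2 X (Y \<odot> Z) \<cdot> (\<rho> \<otimes> (G2 Y Z \<cdot> (\<rho>' \<otimes> \<rho>'')))) \<cdot> asc M X Y Z =
      Ga (asc M X Y Z) \<cdot> (G2 (X \<odot> Y) Z \<cdot> ((G2 X Y \<cdot> (\<rho> \<otimes> \<rho>')) \<otimes> \<rho>''))"
    by (rule coaction_asc[OF G_monoidal]) (use data in auto)
  ultimately show ?thesis unfolding bc_tns_simp is_bicomod_mor_iff using data by simp
qed

lemma bicomod_mor_unitors:
  assumes "bcm (X, \<theta>, \<rho>)"
  shows "bmor (TT (I, F0, G0) (X, \<theta>, \<rho>)) (lu M X) (X, \<theta>, \<rho>)"
    and "bmor (TT (X, \<theta>, \<rho>) (I, F0, G0)) (ru M X) (X, \<theta>, \<rho>)"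
proof -
  note data = assms[unfolded is_bicomod_iff]
  note F = coaction_unitors[OF F_monoidal, of \<theta> X] and G = coaction_unitors[OF G_monoidal, of \<rho> X]
  show "bmor (TT (I, F0, G0) (X, \<theta>, \<rho>)) (lu M X) (X, \<theta>, \<rho>)"
    unfolding bc_tns_simp is_bicomod_mor_iff using data F G by simp
  show "bmor (TT (X, \<theta>, \<rho>) (I, F0, G0)) (ru M X) (X, \<theta>, \<rho>)"
    unfolding bc_tns_simp is_bicomod_mor_iff using data F G by simp
qed

lemma bicomod_moncat_monoidal:
  assumes tensor_law: phi_tensor_law and unit_law: phi_unit_law
  shows "monoidal_category BC"
  unfolding monoidal_category_def
proof (intro conjI)
  show "is_category BC" by (rule is_category_bicomod_moncat)
  show "munit BC \<in> Ob BC" using bicomod_unit[OF unit_law] by simp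
  show "\<forall>A\<in>Ob BC. \<forall>B\<in>Ob BC. tns BC A B \<in> Ob BC"
    using bicomod_tensor[OF tensor_law] by simp
  show "\<forall>f\<in>Ar BC. \<forall>g\<in>Ar BC.
      tnsa BC f g \<in> hom BC (tns BC (src BC f) (src BC g)) (tns BC (tgt BC f) (tgt BC g))"
    by (simp add: ball_Ar_bicomod_moncat hom_iff bicomod_tensor[OF tensor_law] bicomod_mor_tensor
        del: bc_tns_simp)
  show "\<forall>A\<in>Ob BC. \<forall>B\<in>Ob BC. tnsa BC (idn BC A) (idn BC B) = idn BC (tns BC A B)"
    by (simp add: ball_Ob_bicomod_moncat is_bicomod_iff)
  show "\<forall>f\<in>Ar BC. \<forall>g\<in>Ar BC. \<forall>f'\<in>Ar BC. \<forall>g'\<in>Ar BC.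
      tgt BC f = src BC g \<and> tgt BC f' = src BC g' \<longrightarrow>
      tnsa BC (cmp BC g f) (cmp BC g' f') = cmp BC (tnsa BC g g') (tnsa BC f f')"
    by (auto simp: ball_Ar_bicomod_moncat is_bicomod_mor_iff interchange)
  show "\<forall>A\<in>Ob BC. \<forall>B\<in>Ob BC. \<forall>C\<in>Ob BC.
      asc BC A B C \<in> hom BC (tns BC (tns BC A B) C) (tns BC A (tns BC B C)) \<and> is_iso BC (asc BC A B C)"
    by (simp add: ball_Ob_bicomod_moncat hom_iff bicomod_tensor[OF tensor_law] bicomod_mor_asc
        is_iso_bicomod_moncat asc_iso is_bicomod_Ob del: bc_tns_simp)
  show "\<forall>A\<in>Ob BC. lu BC A \<in> hom BC (tns BC (munit BC) A) A \<and> is_iso BC (lu BC A) \<and>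
      ru BC A \<in> hom BC (tns BC A (munit BC)) A \<and> is_iso BC (ru BC A)"
    by (simp add: ball_Ob_bicomod_moncat hom_iff bicomod_tensor[OF tensor_law] bicomod_unit[OF unit_law]
        bicomod_mor_unitors is_iso_bicomod_moncat lu_iso ru_iso is_bicomod_Ob del: bc_tns_simp)
  show "\<forall>f\<in>Ar BC. \<forall>g\<in>Ar BC. \<forall>h\<in>Ar BC.
      cmp BC (asc BC (tgt BC f) (tgt BC g) (tgt BC h)) (tnsa BC (tnsa BC f g) h) =
      cmp BC (tnsa BC f (tnsa BC g h)) (asc BC (src BC f) (src BC g) (src BC h))"
    by (clarsimp simp: ball_Ar_bicomod_moncat is_bicomod_mor_iff) (metis asc_natural)
  show "\<forall>f\<in>Ar BC.
      cmp BC (lu BC (tgt BC f)) (tnsa BC (idn BC (munit BC)) f) = cmp BC f (lu BC (src BC f)) \<and>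
      cmp BC (ru BC (tgt BC f)) (tnsa BC f (idn BC (munit BC))) = cmp BC f (ru BC (src BC f))"
    by (clarsimp simp: ball_Ar_bicomod_moncat is_bicomod_mor_iff) (metis lu_natural ru_natural)
  show "\<forall>W\<in>Ob BC. \<forall>X\<in>Ob BC. \<forall>Y\<in>Ob BC. \<forall>Z\<in>Ob BC.
      cmp BC (tnsa BC (idn BC W) (asc BC X Y Z))
        (cmp BC (asc BC W (tns BC X Y) Z) (tnsa BC (asc BC W X Y) (idn BC Z))) =
      cmp BC (asc BC W X (tns BC Y Z)) (asc BC (tns BC W X) Y Z)"
    using pentagon by (simp add: ball_Ob_bicomod_moncat is_bicomod_iff)
  show "\<forall>X\<in>Ob BC. \<forall>Y\<in>Ob BC. cmp BC (tnsa BC (idn BC X) (lu BC Y)) (asc BC X (munit BC) Y) =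
      tnsa BC (ru BC X) (idn BC Y)"
    using triangle by (simp add: ball_Ob_bicomod_moncat is_bicomod_iff)
qed

lemma cofree_bicomod:
  assumes X: "X \<in> Ob'"
  shows "bcm (F1 (G1 X), DF (G1 X), cofree_G X)"
proof -
  have "\<phi> (F1 (G1 X)) \<cdot> (Fa (cofree_G X) \<cdot> DF (G1 X)) = Ga (DF (G1 X)) \<cdot> cofree_G X"
    using X by (simp add: comp_subst2[OF phi_DF[symmetric]] DF_natL)
  then show ?thesis unfolding is_bicomod_iff
    using X cofree_G_coassoc[OF X] G_counit_left_F[OF X] F_coassoc F_counit_left
    by (simp add: comp_subst2[OF phi_eG])
qed

lemma cofree_compat_projections:
  assumes X: "X \<in> Ob'"
  shows "Fa (Ga (SE X)) \<cdot> (Fa (cofree_G X) \<cdot> DF (G1 X)) = id' (F1 (G1 X))"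
    and "Ga (Fa (SE X)) \<cdot> (Ga (DF (G1 X)) \<cdot> cofree_G X) = \<phi> X"
proof -
  have G_side: "Ga (SE X) \<cdot> cofree_G X = eF (G1 X)"
    unfolding SE_eq using X by (simp add: comp_subst2[OF phi_eF] eF_natL comp_subst2[OF G_counit_right])
  have F_lift: "Fa (Ga (SE X)) \<cdot> Fa (cofree_G X) = Fa (eF (G1 X))"
    using F_comp_eq[OF G_side] X by simp
  show "Fa (Ga (SE X)) \<cdot> (Fa (cofree_G X) \<cdot> DF (G1 X)) = id' (F1 (G1 X))"
    using X comp_subst2[OF F_lift, of "DF (G1 X)"] F_counit_right by (simp del: G_comp F_comp)
next
  have F_side: "Fa (SE X) \<cdot> DF (G1 X) = Fa (eG X)"
    unfolding SE_eq using X by (simp add: F_counit_right comp_subst2[OF F_counit_right])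
  have G_lift: "Ga (Fa (SE X)) \<cdot> Ga (DF (G1 X)) = Ga (Fa (eG X))"
    using G_comp_eq[OF F_side] X by simp
  moreover have "Ga (Fa (eG X)) \<cdot> cofree_G X = \<phi> X"
    using X by (simp add: comp_subst2[OF phi_natR] G_counit_right_F)
  ultimately show "Ga (Fa (SE X)) \<cdot> (Ga (DF (G1 X)) \<cdot> cofree_G X) = \<phi> X"
    using X comp_subst2[OF G_lift, of "cofree_G X"] by (simp del: F_comp G_comp)
qed

lemma cofree_tensor_projection_F_side:
  assumes X: "X \<in> Ob'" and Y: "Y \<in> Ob'"
  shows "Ga (Fa (SE X \<otimes> SE Y)) \<cdot> (\<phi> (F1 (G1 X) \<odot> F1 (G1 Y)) \<cdot>
      (Fa (G2 (F1 (G1 X)) (F1 (G1 Y)) \<cdot> (cofree_G X \<otimes> cofree_G Y)) \<cdot>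
       (F2 (F1 (G1 X)) (F1 (G1 Y)) \<cdot> (DF (G1 X) \<otimes> DF (G1 Y))))) =
    \<phi> (X \<odot> Y) \<cdot> (Fa (G2 X Y) \<cdot> F2 (G1 X) (G1 Y))"
proof -
  have G2_SE: "Fa (Ga (SE X \<otimes> SE Y)) \<cdot> Fa (G2 (F1 (G1 X)) (F1 (G1 Y))) =
      Fa (G2 X Y) \<cdot> Fa (Ga (SE X) \<otimes> Ga (SE Y))"
    using X Y by (simp flip: F_comp G_comp add: G2_natR)
  show ?thesis
    using X Y cofree_compat_projections(1)[OF X] cofree_compat_projections(1)[OF Y]
    by (simp add: comp_subst2[OF phi_natR] comp_subst2[OF G2_SE] F2_natR comp_subst2[OF F2_natR]
        tensor_comp del: G_comp)
qed

lemma cofree_tensor_projection_G_side: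
  assumes X: "X \<in> Ob'" and Y: "Y \<in> Ob'"
  shows "Ga (Fa (SE X \<otimes> SE Y)) \<cdot> (Ga (F2 (F1 (G1 X)) (F1 (G1 Y)) \<cdot> (DF (G1 X) \<otimes> DF (G1 Y))) \<cdot>
      (G2 (F1 (G1 X)) (F1 (G1 Y)) \<cdot> (cofree_G X \<otimes> cofree_G Y))) =
    Ga (F2 X Y) \<cdot> (G2 (F1 X) (F1 Y) \<cdot> (\<phi> X \<otimes> \<phi> Y))"
proof -
  have F2_SE: "Ga (Fa (SE X \<otimes> SE Y)) \<cdot> Ga (F2 (F1 (G1 X)) (F1 (G1 Y))) =
      Ga (F2 X Y) \<cdot> Ga (Fa (SE X) \<otimes> Fa (SE Y))"
    using X Y by (simp flip: G_comp add: F2_natR del: F_comp)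
  show ?thesis
    using X Y cofree_compat_projections(2)[OF X] cofree_compat_projections(2)[OF Y]
    by (simp add: F2_SE comp_subst2[OF F2_SE] G2_natR comp_subst2[OF G2_natR] tensor_comp del: F_comp)
qed

lemma phi_tensor_law_of_bicomod_tensor_closed:
  assumes closed: "\<forall>A\<in>Ob BC. \<forall>B\<in>Ob BC. tns BC A B \<in> Ob BC"
  shows phi_tensor_law
proof (intro ballI)
  fix X Y assume X: "X \<in> Ob'" and Y: "Y \<in> Ob'"
  have "bcm (TT (F1 (G1 X), DF (G1 X), cofree_G X) (F1 (G1 Y), DF (G1 Y), cofree_G Y))"
    using closed cofree_bicomod[OF X] cofree_bicomod[OF Y] by simp
  then have "\<phi> (F1 (G1 X) \<odot> F1 (G1 Y)) \<cdot>
      (Fa (G2 (F1 (G1 X)) (F1 (G1 Y)) \<cdot> (cofree_G X \<otimes> cofree_G Y)) \<cdot>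
       (F2 (F1 (G1 X)) (F1 (G1 Y)) \<cdot> (DF (G1 X) \<otimes> DF (G1 Y)))) =
    Ga (F2 (F1 (G1 X)) (F1 (G1 Y)) \<cdot> (DF (G1 X) \<otimes> DF (G1 Y))) \<cdot>
      (G2 (F1 (G1 X)) (F1 (G1 Y)) \<cdot> (cofree_G X \<otimes> cofree_G Y))"
    unfolding bc_tns_simp is_bicomod_iff by blast
  then show "\<phi> (X \<odot> Y) \<cdot> (Fa (G2 X Y) \<cdot> F2 (G1 X) (G1 Y)) =
      Ga (F2 X Y) \<cdot> (G2 (F1 X) (F1 Y) \<cdot> (\<phi> X \<otimes> \<phi> Y))"
    using cofree_tensor_projection_F_side[OF X Y] cofree_tensor_projection_G_side[OF X Y] by metis
qed

lemma bicomod_moncat_monoidal_iff_monoidal_dist_law: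
  "monoidal_category BC \<longleftrightarrow> monoidal_dist_law M F F2 F0 G G2 G0 \<phi>"
proof
  assume BC: "monoidal_category BC"
  have "\<forall>A\<in>Ob BC. \<forall>B\<in>Ob BC. tns BC A B \<in> Ob BC"
    using BC unfolding monoidal_category_def by (elim conjE) assumption
  moreover have "munit BC \<in> Ob BC"
    using BC unfolding monoidal_category_def by (elim conjE) assumption
  then have phi_unit_law by (simp add: is_bicomod_iff)
  ultimately show "monoidal_dist_law M F F2 F0 G G2 G0 \<phi>"
    unfolding monoidal_dist_law_iff using phi_tensor_law_of_bicomod_tensor_closed by blast
next
  assume "monoidal_dist_law M F F2 F0 G G2 G0 \<phi>"
  then show "monoidal_category BC"
    unfolding monoidal_dist_law_iff using bicomod_moncat_monoidal by blast
qed

end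

theorem theorem3p5:
  fixes M :: "('o,'a) moncat"
    and F :: "('o,'a,'o,'a) ftr" and DF eF :: "'o \<Rightarrow> 'a" and F2 :: "'o \<Rightarrow> 'o \<Rightarrow> 'a" and F0 :: 'a
    and G :: "('o,'a,'o,'a) ftr" and dG eG :: "'o \<Rightarrow> 'a" and G2 :: "'o \<Rightarrow> 'o \<Rightarrow> 'a" and G0 :: 'a
    and \<phi> :: "'o \<Rightarrow> 'a"
  assumes "monoidal_category M"
    and "bicomonad M F DF eF F2 F0"
    and "bicomonad M G dG eG G2 G0"
    and "dist_law M F DF eF G dG eG \<phi>"
  defines "P1 \<equiv> monoidal_category (bicomod_moncat M F DF eF F2 F0 G dG eG G2 G0 \<phi>)"
    and "P2 \<equiv> monoidal_dist_law M F F2 F0 G G2 G0 \<phi>"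
    and "P3 \<equiv> bicomonad M (fcomp F G) (smash_comult M F DF G dG \<phi>) (smash_counit M eF G eG)
                 (smash_F2 M F F2 G G2) (smash_F0 M F F0 G0)"
    and "P4 \<equiv>
           cmd_2cell (prod_cat M M) (prod_ftr G G) (prod_nt dG dG) (prod_nt eG eG) M G dG eG
             (fcomp (tens_ftr M) (prod_ftr F F))
             (\<lambda>(X, Y). cmp M (G2 (fo F X) (fo F Y)) (tnsa M (\<phi> X) (\<phi> Y)))
             (fcomp F (tens_ftr M))
             (\<lambda>(X, Y). cmp M (\<phi> (tns M X Y)) (fa F (G2 X Y)))
             (\<lambda>(X, Y). F2 X Y)
         \<and> cmd_2cell term_cat id_ftr (\<lambda>_. ()) (\<lambda>_. ()) M G dG eG
             (unit_ftr M) (\<lambda>_. G0)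
             (fcomp F (unit_ftr M)) (\<lambda>_. cmp M (\<phi> (munit M)) (fa F G0))
             (\<lambda>_. F0)"
    and "P5 \<equiv>
           cc_1cell (prod_cat M M) (prod_ftr F F) (prod_nt DF DF) (prod_nt eF eF)
             (prod_ftr G G) (prod_nt dG dG) (prod_nt eG eG) (prod_nt \<phi> \<phi>)
             M F DF eF G dG eG \<phi>
             (tens_ftr M) (\<lambda>(X, Y). F2 X Y) (\<lambda>(X, Y). G2 X Y)
         \<and> cc_1cell term_cat id_ftr (\<lambda>_. ()) (\<lambda>_. ()) id_ftr (\<lambda>_. ()) (\<lambda>_. ()) (\<lambda>_. ())
             M F DF eF G dG eG \<phi>
             (unit_ftr M) (\<lambda>_. F0) (\<lambda>_. G0)"
  shows "(P1 \<longleftrightarrow> P2) \<and> (P2 \<longleftrightarrow> P3) \<and> (P3 \<longleftrightarrow> P4) \<and> (P4 \<longleftrightarrow> P5)"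
proof -
  interpret bicomonads_with_dist_law M F DF eF F2 F0 G dG eG G2 G0 \<phi>
    using assms(1-4) by unfold_locales
  have "P1 \<longleftrightarrow> P2" unfolding P1_def P2_def by (rule bicomod_moncat_monoidal_iff_monoidal_dist_law)
  moreover have "P3 \<longleftrightarrow> P2" unfolding P3_def P2_def by (rule smash_bicomonad_iff_monoidal_dist_law)
  moreover have "P4 \<longleftrightarrow> P2" unfolding P4_def P2_def by (rule cmd_2cells_iff_monoidal_dist_law)
  moreover have "P5 \<longleftrightarrow> P2" unfolding P5_def P2_def by (rule cc_1cells_iff_monoidal_dist_law)
  ultimately show ?thesis by blast
qed

end
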